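(* Assume $A\cap B=\emptyset$, $C\ne[m]$ and $|A|\ge2$. (a) If $q\ge3$, or $q=2$ and $|[m]\setminus C|\ge2$, then $\mathcal C_{\overline{\mathcal N}_4}$ is a $q$-ary $\left[\frac{2(q^m-q^{|C|})(q^{|A|}-1)q^{|B|}}{q-1},\ m+2|A|+|B|,\ (q^m-q^{|C|})q^{|A|+|B|-1}\right]$ locally repairable code with locality $2$. (b) If $q=2$ and $|[m]\setminus C|=1$, then $\mathcal C_{\overline{\mathcal N}_4}$ is a binary $\left[(2^{|A|}-1)2^{m+|B|},\ m+2|A|+|B|,\ 2^{m+|A|+|B|-2}\right]$ locally repairable code with locality $3$.
   Context: $q$ is a prime power, $\mathbb F_q$ the field of order $q$, $\mathbb F_q^*=\mathbb F_q\setminus\{0\}$, $m\ge2$, $[m]=\{1,\dots,m\}$, $\mathrm{supp}(v)=\{i:v_i\ne0\}$. For nonempty $P\subseteq[m]$, $\Delta_P=\{v\in\mathbb F_q^m:\mathrm{supp}(v)\subseteq P\}$, $\Delta_P^c=\mathbb F_q^m\setminus\Delta_P$, $\Delta_P^*=\Delta_P\setminus\{\mathbf 0\}$. $A,B,C$ are nonempty subsets of $[m]$. Let $\mathcal N_4=\{(w_2+\omega,w_3,w_1)\in\mathbb F_q^{3m}: w_1\in\Delta_A^*,\ w_2\in\Delta_B,\ w_3\in\Delta_C^c,\ \omega\in\{\mathbf 0,w_1\}\}$ (closed under multiplication by $\mathbb F_q^*$), let $\overline{\mathcal N}_4$ contain exactly one element of each class $\{\alpha x:\alpha\in\mathbb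 F_q^*\}$, $x\in\mathcal N_4$, let $G$ be the $3m\times|\overline{\mathcal N}_4|$ matrix whose columns are the elements of $\overline{\mathcal N}_4$, and let $\mathcal C_{\overline{\mathcal N}_4}$ be its row span over $\mathbb F_q$. The code has locality $r$ (with respect to $G$) if $r$ is the least positive integer such that every column of $G$ is an $\mathbb F_q$-linear combination of at most $r$ other columns of $G$; a $q$-ary $[n,k,d]$ locally repairable code with locality $r$ is a linear $[n,k,d]$ code with locality $r$. *)

theory Defs
  imports Main "HOL.Vector_Spaces" "HOL-Library.Function_Algebras"
begin

text \<open>Vectors of F_q^m are functions nat => 'a vanishing outside {1..m}.
  Points of F_q^{3m} are triples of such vectors.\<close>

type_synonym 'a vec3 = "(nat \<Rightarrow> 'a) \<times> (nat \<Rightarrow> 'a) \<times> (nat \<Rightarrow> 'a)"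

definition fvec :: "nat \<Rightarrow> (nat \<Rightarrow> 'a::zero) set" where
  "fvec m = {v. \<forall>i. i \<notin> {1..m} \<longrightarrow> v i = 0}"

definition supp :: "(nat \<Rightarrow> 'a::zero) \<Rightarrow> nat set" where
  "supp v = {i. v i \<noteq> 0}"

definition Delta :: "nat \<Rightarrow> nat set \<Rightarrow> (nat \<Rightarrow> 'a::zero) set" where
  "Delta m P = {v \<in> fvec m. supp v \<subseteq> P}"

definition Delta_c :: "nat \<Rightarrow> nat set \<Rightarrow> (nat \<Rightarrow> 'a::zero) set" where
  "Delta_c m P = fvec m - Delta m P"

definition Delta_star :: "nat \<Rightarrow> nat set \<Rightarrow> (nat \<Rightarrow> 'a::zero) set" where
  "Delta_star m P = Delta m P - {(\<lambda>_. 0)}"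

definition N4 :: "nat \<Rightarrow> nat set \<Rightarrow> nat set \<Rightarrow> nat set \<Rightarrow> ('a::ring_1) vec3 set" where
  "N4 m A B C = {((\<lambda>i. w2 i + \<omega> i), w3, w1) | w1 w2 w3 \<omega>.
      w1 \<in> Delta_star m A \<and> w2 \<in> Delta m B \<and> w3 \<in> Delta_c m C \<and> \<omega> \<in> {(\<lambda>_. 0), w1}}"

definition smult3 :: "'a::ring_1 \<Rightarrow> 'a vec3 \<Rightarrow> 'a vec3" where
  "smult3 c x = ((\<lambda>i. c * fst x i), (\<lambda>i. c * fst (snd x) i), (\<lambda>i. c * snd (snd x) i))"

definition is_projective_rep :: "('a::field) vec3 set \<Rightarrow> 'a vec3 set \<Rightarrow> bool" where
  "is_projective_rep N Nbar \<longleftrightarrow> Nbar \<subseteq> N \<and>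
     (\<forall>x\<in>N. \<exists>!y. y \<in> Nbar \<and> (\<exists>\<alpha>. \<alpha> \<noteq> 0 \<and> y = smult3 \<alpha> x))"

definition dot3 :: "nat \<Rightarrow> ('a::comm_ring_1) vec3 \<Rightarrow> 'a vec3 \<Rightarrow> 'a" where
  "dot3 m x g = (\<Sum>i\<in>{1..m}. fst x i * fst g i + fst (snd x) i * fst (snd g) i
                              + snd (snd x) i * snd (snd g) i)"

text \<open>Row span of the generator matrix G whose columns are the elements of Nbar:
  the codewords x^T G, indexed by the columns (zero outside Nbar).\<close>
definition code :: "nat \<Rightarrow> ('a::comm_ring_1) vec3 set \<Rightarrow> ('a vec3 \<Rightarrow> 'a) set" where
  "code m Nbar = {(\<lambda>g. if g \<in> Nbar then dot3 m x g else 0) | x. x \<in> fvec m \<times> fvec m \<times> fvec m}"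

definition code_length :: "('a::zero) vec3 set \<Rightarrow> nat" where
  "code_length Nbar = card Nbar"

definition fscale :: "'a::field \<Rightarrow> ('b \<Rightarrow> 'a) \<Rightarrow> ('b \<Rightarrow> 'a)" where
  "fscale c f = (\<lambda>x. c * f x)"

lemma vector_space_fscale: "vector_space fscale"
  by unfold_locales (auto simp: fscale_def algebra_simps fun_eq_iff)

definition code_dim :: "('b \<Rightarrow> 'a::field) set \<Rightarrow> nat" where
  "code_dim Cd = vector_space.dim fscale Cd"

definition hdist :: "'b set \<Rightarrow> ('b \<Rightarrow> 'a) \<Rightarrow> ('b \<Rightarrow> 'a) \<Rightarrow> nat" where
  "hdist I c c' = card {g \<in> I. c g \<noteq> c' g}"

definition min_dist :: "'b set \<Rightarrow> ('b \<Rightarrow> 'a) set \<Rightarrow> nat" where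
  "min_dist I Cd = Min {hdist I c c' | c c'. c \<in> Cd \<and> c' \<in> Cd \<and> c \<noteq> c'}"

definition lin_comb3 :: "('a::ring_1) vec3 set \<Rightarrow> 'a vec3 \<Rightarrow> bool" where
  "lin_comb3 S g \<longleftrightarrow> (\<exists>c. g = ((\<lambda>i. \<Sum>s\<in>S. c s * fst s i),
                                (\<lambda>i. \<Sum>s\<in>S. c s * fst (snd s) i),
                                (\<lambda>i. \<Sum>s\<in>S. c s * snd (snd s) i)))"

definition repairable_with :: "('a::ring_1) vec3 set \<Rightarrow> nat \<Rightarrow> bool" where
  "repairable_with Nbar r \<longleftrightarrow>
     (\<forall>g\<in>Nbar. \<exists>S. S \<subseteq> Nbar - {g} \<and> card S \<le> r \<and> lin_comb3 S g)"

definition has_locality :: "('a::ring_1) vec3 set \<Rightarrow> nat \<Rightarrow> bool" where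
  "has_locality Nbar r \<longleftrightarrow> r > 0 \<and> repairable_with Nbar r \<and>
     (\<forall>r'. 0 < r' \<and> r' < r \<longrightarrow> \<not> repairable_with Nbar r')"

end

(*
  Parametrize N4 by (w1, w2, w3, e) in Delta*_A x Delta_B x Delta^c_C x {0, 1}, sending it to
  (w2 + e w1, w3, w1); this is injective because A and B are disjoint, which counts N4, and the
  length follows since every scaling orbit has q - 1 elements and meets Nbar once.

  The codeword of x = (a, b, c) takes the value <a, w2 + e w1> + <b, w3> + <c, w1> at such a point.
  It depends only on a on A u B, on b, and on c on A, i.e. on m + 2|A| + |B| coordinates of x.
  Counting the nonzeros of affine forms over the parameters (summing first over w2, w1 or w3,
  according to which of these coordinates of x is nonzero) shows that every x that is nonzero
  on them has weight at least (q^m - q^|C|) q^(|A|+|B|-1), with equality for x = (e_i, 0, 0),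
  i in A. This gives the minimum distance, and it shows that the m + 2|A| + |B| coordinate
  functionals form a basis of the code.

  For locality, splitting w1 = (w1 - e_k) + e_k and w3 = t1 + t2 writes every point as the sum
  of two points of N4 not proportional to it, and a variant with three summands needs no
  condition on q or C. No column is a multiple of another one, and in the remaining binary
  case every point of N4 has middle block equal to 1 at the only coordinate outside C, so no
  two columns add up to a third.
*)

theory Submission
  imports Defs "HOL-Library.FuncSet" "HOL-Library.Cardinality"
begin

section \<open>Vectors supported on a set of coordinates\<close>

lemma Delta_eq: "P \<subseteq> {1..m} \<Longrightarrow> Delta m P = {v. \<forall>i. i \<notin> P \<longrightarrow> v i = 0}"
  unfolding Delta_def fvec_def supp_def by auto

lemma fvec_eq_Delta: "fvec m = Delta m {1..m}"
  unfolding Delta_def fvec_def supp_def by auto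

lemma Delta_subset_fvec: "Delta m P \<subseteq> fvec m"
  by (auto simp: Delta_def)

lemma zero_in_Delta: "(\<lambda>_. 0) \<in> Delta m P"
  by (simp add: Delta_def fvec_def supp_def)

lemma Delta_vanishes: "v \<in> Delta m P \<Longrightarrow> i \<notin> P \<Longrightarrow> v i = 0"
  by (auto simp: Delta_def supp_def)

lemma bij_betw_restrict_vanishing:
  "bij_betw (\<lambda>v. restrict v P) {v. \<forall>i. i \<notin> P \<longrightarrow> v i = (0::'a::zero)} (P \<rightarrow>\<^sub>E UNIV)"
  by (rule bij_betw_byWitness[where f' = "\<lambda>f i. if i \<in> P then f i else 0"])
    (auto simp: fun_eq_iff PiE_def extensional_def)

lemma card_Delta:
  assumes "P \<subseteq> {1..m}"
  shows "card (Delta m P :: (nat \<Rightarrow> 'a::{finite,zero}) set) = CARD('a) ^ card P"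
proof -
  have "finite P" using assms finite_subset by blast
  then show ?thesis
    unfolding Delta_eq[OF assms] bij_betw_same_card[OF bij_betw_restrict_vanishing]
    by (simp add: card_PiE)
qed

lemma finite_Delta: "finite (Delta m P :: (nat \<Rightarrow> 'a::{finite,zero}) set)"
proof -
  have "finite (Delta m {1..m} :: (nat \<Rightarrow> 'a) set)"
    unfolding Delta_eq[OF order_refl] bij_betw_finite[OF bij_betw_restrict_vanishing]
    by (simp add: finite_PiE)
  then show ?thesis
    by (rule finite_subset[OF Delta_subset_fvec[unfolded fvec_eq_Delta]])
qed

lemma finite_fvec: "finite (fvec m :: (nat \<Rightarrow> 'a::{finite,zero}) set)"
  using finite_Delta by (simp add: fvec_eq_Delta)

lemma card_fvec: "card (fvec m :: (nat \<Rightarrow> 'a::{finite,zero}) set) = CARD('a) ^ m"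
  by (simp add: fvec_eq_Delta card_Delta)

lemma finite_Delta_star: "finite (Delta_star m P :: (nat \<Rightarrow> 'a::{finite,zero}) set)"
  by (simp add: Delta_star_def finite_Delta)

lemma card_Delta_star:
  "P \<subseteq> {1..m} \<Longrightarrow> card (Delta_star m P :: (nat \<Rightarrow> 'a::{finite,zero}) set) = CARD('a) ^ card P - 1"
  by (simp add: Delta_star_def card_Delta finite_Delta zero_in_Delta)

lemma finite_Delta_c: "finite (Delta_c m P :: (nat \<Rightarrow> 'a::{finite,zero}) set)"
  by (simp add: Delta_c_def finite_fvec)

lemma card_Delta_c:
  "P \<subseteq> {1..m} \<Longrightarrow> card (Delta_c m P :: (nat \<Rightarrow> 'a::{finite,zero}) set) = CARD('a) ^ m - CARD('a) ^ card P"
  by (simp add: Delta_c_def card_Diff_subset finite_Delta Delta_subset_fvec card_fvec card_Delta)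

lemma card_filter_Delta_c:
  "card {w\<in>Delta_c m C. Q w} = card {w\<in>fvec m. Q w} - card {w\<in>Delta m C :: (nat \<Rightarrow> 'a::{finite,zero}) set. Q w}"
proof -
  have "{w\<in>Delta_c m C. Q w} = {w\<in>fvec m. Q w} - {w\<in>Delta m C. Q w}"
    by (auto simp: Delta_c_def)
  moreover have "{w\<in>Delta m C. Q w} \<subseteq> {w\<in>fvec m. Q w}"
    using Delta_subset_fvec by blast
  moreover have "finite {w\<in>Delta m C :: (nat \<Rightarrow> 'a) set. Q w}"
    using finite_Delta[of m C] by (rule rev_finite_subset) auto
  ultimately show ?thesis by (simp add: card_Diff_subset)
qed

lemma Delta_starE:
  assumes "w \<in> Delta_star m P"
  obtains j where "j \<in> P" "w j \<noteq> 0"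
  using assms by (auto simp: Delta_star_def Delta_def supp_def fun_eq_iff)

lemma Delta_starI: "v \<in> Delta m P \<Longrightarrow> v j \<noteq> 0 \<Longrightarrow> v \<in> Delta_star m P"
  by (auto simp: Delta_star_def)

lemma Delta_cE:
  assumes "w \<in> Delta_c m C"
  obtains j where "j \<in> {1..m}" "j \<notin> C" "w j \<noteq> 0"
  using assms by (auto simp: Delta_c_def Delta_def supp_def fvec_def)

lemma Delta_cI: "v \<in> fvec m \<Longrightarrow> j \<notin> C \<Longrightarrow> v j \<noteq> 0 \<Longrightarrow> v \<in> Delta_c m C"
  by (auto simp: Delta_c_def Delta_def supp_def)

lemma scale_in_Delta_iff:
  "(c::'a::field) \<noteq> 0 \<Longrightarrow> (\<lambda>i. c * v i) \<in> Delta m P \<longleftrightarrow> v \<in> Delta m P"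
  by (auto simp: Delta_def fvec_def supp_def)

lemma scale_in_fvec_iff: "(c::'a::field) \<noteq> 0 \<Longrightarrow> (\<lambda>i. c * v i) \<in> fvec m \<longleftrightarrow> v \<in> fvec m"
  by (auto simp: fvec_def)

lemma scale_in_Delta_star_iff:
  "(c::'a::field) \<noteq> 0 \<Longrightarrow> (\<lambda>i. c * v i) \<in> Delta_star m P \<longleftrightarrow> v \<in> Delta_star m P"
  by (auto simp: Delta_star_def scale_in_Delta_iff fun_eq_iff)

lemma scale_in_Delta_c_iff:
  "(c::'a::field) \<noteq> 0 \<Longrightarrow> (\<lambda>i. c * v i) \<in> Delta_c m P \<longleftrightarrow> v \<in> Delta_c m P"
  by (simp add: Delta_c_def scale_in_Delta_iff scale_in_fvec_iff)

definition unit_vec :: "nat \<Rightarrow> nat \<Rightarrow> 'a::zero_neq_one" where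
  "unit_vec i = (\<lambda>j. if j = i then 1 else 0)"

lemma unit_vec_in_fvec: "i \<in> {1..m} \<Longrightarrow> unit_vec i \<in> fvec m"
  by (simp add: fvec_def unit_vec_def)

lemma unit_vec_in_Delta: "i \<in> P \<Longrightarrow> P \<subseteq> {1..m} \<Longrightarrow> unit_vec i \<in> Delta m P"
  by (auto simp: Delta_eq unit_vec_def)

lemma unit_vec_in_Delta_star:
  assumes "k \<in> A" "A \<subseteq> {1..m}"
  shows "unit_vec k \<in> Delta_star m A"
proof (rule Delta_starI)
  show "unit_vec k \<in> Delta m A" using assms by (rule unit_vec_in_Delta)
  show "unit_vec k k \<noteq> 0" by (simp add: unit_vec_def)
qed

lemma unit_vec_in_Delta_c:
  assumes "j \<in> {1..m}" "j \<notin> C"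
  shows "unit_vec j \<in> Delta_c m C"
proof (rule Delta_cI)
  show "unit_vec j \<in> fvec m" using assms(1) by (rule unit_vec_in_fvec)
  show "unit_vec j j \<noteq> 0" by (simp add: unit_vec_def)
qed (fact assms(2))

section \<open>Affine forms on supported vectors\<close>

definition dotv :: "nat \<Rightarrow> (nat \<Rightarrow> 'a::comm_ring_1) \<Rightarrow> (nat \<Rightarrow> 'a) \<Rightarrow> 'a" where
  "dotv m a v = (\<Sum>i\<in>{1..m}. a i * v i)"

lemma dot3_eq_dotv:
  "dot3 m (a, b, c) g = dotv m a (fst g) + dotv m b (fst (snd g)) + dotv m c (snd (snd g))"
  by (simp add: dot3_def dotv_def sum.distrib)

lemma dotv_add_left: "dotv m (\<lambda>i. a i + b i) v = dotv m a v + dotv m b v"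
  by (simp add: dotv_def sum.distrib distrib_right)

lemma dotv_zero_left [simp]: "dotv m (\<lambda>_. 0) v = 0"
  by (simp add: dotv_def)

lemma dotv_zero_right [simp]: "dotv m a (\<lambda>_. 0) = 0"
  by (simp add: dotv_def)

lemma dotv_unit_vec: "i \<in> {1..m} \<Longrightarrow> dotv m (unit_vec i) v = v i"
proof -
  have "unit_vec i j * v j = (if j = i then v i else 0)" for j
    by (simp add: unit_vec_def)
  then show "i \<in> {1..m} \<Longrightarrow> ?thesis" by (simp add: dotv_def)
qed

lemma dotv_Delta:
  "P \<subseteq> {1..m} \<Longrightarrow> v \<in> Delta m P \<Longrightarrow> dotv m a v = (\<Sum>i\<in>P. a i * v i)"
  unfolding dotv_def by (rule sum.mono_neutral_right) (auto simp: Delta_eq)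

lemma dotv_Delta_eq_0:
  "P \<subseteq> {1..m} \<Longrightarrow> v \<in> Delta m P \<Longrightarrow> \<forall>i\<in>P. a i = 0 \<Longrightarrow> dotv m a v = 0"
  by (simp add: dotv_Delta)

lemma dotv_fun_upd:
  "i \<in> {1..m} \<Longrightarrow> dotv m a (v(i := t)) = dotv m a v + a i * (t - v i)"
proof -
  assume i: "i \<in> {1..m}"
  have "dotv m a (v(i := t)) = (\<Sum>j\<in>{1..m}. a j * v j + (if j = i then a i * (t - v i) else 0))"
    unfolding dotv_def by (rule sum.cong) (auto simp: algebra_simps)
  with i show ?thesis by (simp add: dotv_def sum.distrib)
qed

lemma card_affine_zero:
  fixes a :: "nat \<Rightarrow> 'a::{finite,field}"
  assumes P: "P \<subseteq> {1..m}" and i: "i \<in> P" and ai: "a i \<noteq> 0"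
  shows "card {v\<in>Delta m P. dotv m a v + k = 0} = CARD('a) ^ (card P - 1)"
proof -
  have im: "i \<in> {1..m}" and P': "P - {i} \<subseteq> {1..m}" using P i by auto
  have "bij_betw (\<lambda>v. v(i := 0)) {v\<in>Delta m P. dotv m a v + k = 0} (Delta m (P - {i}))"
  proof (rule bij_betw_byWitness[where f' = "\<lambda>w. w(i := - (k + dotv m a w) / a i)"])
    show "\<forall>v\<in>{v\<in>Delta m P. dotv m a v + k = 0}. (v(i := 0))(i := - (k + dotv m a (v(i := 0))) / a i) = v"
      using ai by (auto simp: dotv_fun_upd[OF im] fun_eq_iff field_simps add_eq_0_iff)
    show "\<forall>w\<in>Delta m (P - {i}). (w(i := - (k + dotv m a w) / a i))(i := 0) = w"
      using P' by (auto simp: Delta_eq fun_eq_iff)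
    show "(\<lambda>v. v(i := 0)) ` {v\<in>Delta m P. dotv m a v + k = 0} \<subseteq> Delta m (P - {i})"
      using P P' by (auto simp: Delta_eq)
    show "(\<lambda>w. w(i := - (k + dotv m a w) / a i)) ` Delta m (P - {i}) \<subseteq> {v\<in>Delta m P. dotv m a v + k = 0}"
      using P P' i ai by (auto simp: Delta_eq dotv_fun_upd[OF im] field_simps)
  qed
  then have "card {v\<in>Delta m P. dotv m a v + k = 0} = card (Delta m (P - {i}) :: (nat \<Rightarrow> 'a) set)"
    by (rule bij_betw_same_card)
  with P' i finite_subset[OF P] show ?thesis by (simp add: card_Delta)
qed

lemma card_affine_nonzero:
  fixes a :: "nat \<Rightarrow> 'a::{finite,field}"
  assumes "P \<subseteq> {1..m}" "i \<in> P" "a i \<noteq> 0"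
  shows "card {v\<in>Delta m P. dotv m a v + k \<noteq> 0} = CARD('a) ^ card P - CARD('a) ^ (card P - 1)"
proof -
  have "{v\<in>Delta m P. dotv m a v + k \<noteq> 0} = Delta m P - {v\<in>Delta m P. dotv m a v + k = 0}"
    by auto
  then show ?thesis
    using assms by (simp add: card_Diff_subset finite_Delta card_Delta card_affine_zero)
qed

lemma card_affine_nonzero_const:
  fixes a :: "nat \<Rightarrow> 'a::{finite,field}"
  assumes "P \<subseteq> {1..m}" "\<forall>i\<in>P. a i = 0"
  shows "card {v\<in>Delta m P. dotv m a v + k \<noteq> 0} = (if k = 0 then 0 else CARD('a) ^ card P)"
proof -
  have "{v\<in>Delta m P. dotv m a v + k \<noteq> 0} = (if k = 0 then {} else Delta m P)"
    using assms by (auto simp: dotv_Delta_eq_0)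
  then show ?thesis using assms(1) by (simp add: card_Delta)
qed

section \<open>Systems of projective representatives\<close>

lemma smult3_smult3 [simp]: "smult3 a (smult3 b x) = smult3 (a * b) x"
  by (simp add: smult3_def mult.assoc)

lemma smult3_one [simp]: "smult3 1 x = x"
  by (simp add: smult3_def)

lemma smult3_cancel_right:
  assumes "smult3 a y = smult3 (b::'a::field) y" and "snd (snd y) \<noteq> (\<lambda>_. 0)"
  shows "a = b"
proof -
  obtain j where "snd (snd y) j \<noteq> 0" using assms(2) by auto
  with fun_cong[OF arg_cong[where f = "\<lambda>x. snd (snd x)", OF assms(1)], of j] show ?thesis
    by (simp add: smult3_def)
qed

lemma projective_rep_subset: "is_projective_rep N Nbar \<Longrightarrow> Nbar \<subseteq> N"
  by (simp add: is_projective_rep_def)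

lemma projective_repE:
  assumes "is_projective_rep N Nbar" "x \<in> N"
  obtains a where "a \<noteq> 0" "smult3 a x \<in> Nbar"
  using assms unfolding is_projective_rep_def by blast

lemma projective_rep_unique:
  assumes "is_projective_rep N Nbar" "x \<in> N"
    and "smult3 a x \<in> Nbar" "a \<noteq> 0" "smult3 b x \<in> Nbar" "b \<noteq> 0"
  shows "smult3 a x = smult3 b x"
  using assms unfolding is_projective_rep_def by blast

lemma projective_rep_smult3_eq:
  assumes rep: "is_projective_rep N Nbar" and free: "\<And>g. g \<in> N \<Longrightarrow> snd (snd g) \<noteq> (\<lambda>_. 0)"
    and y: "y \<in> Nbar" "y' \<in> Nbar" and ab: "a \<noteq> 0" "b \<noteq> 0" and eq: "smult3 a y = smult3 (b::'a::field) y'"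
  shows "y = y' \<and> a = b"
proof -
  have sub: "Nbar \<subseteq> N" using rep by (rule projective_rep_subset)
  have y': "y' = smult3 (inverse b * a) y"
    using arg_cong[OF eq, of "smult3 (inverse b)"] ab by simp
  then have "smult3 1 y = smult3 (inverse b * a) y"
    using projective_rep_unique[OF rep, of y 1 "inverse b * a"] y sub ab by auto
  with y' have "y = y'" by simp
  moreover have "a = b"
    using smult3_cancel_right[of a y b] eq free y sub \<open>y = y'\<close> by blast
  ultimately show ?thesis ..
qed

text \<open>Every scaling orbit in \<open>N\<close> has \<open>q - 1\<close> elements and meets \<open>Nbar\<close> exactly once.\<close>

lemma card_filter_projective_rep:
  fixes N Nbar :: "('a::{finite,field}) vec3 set"
  assumes rep: "is_projective_rep N Nbar"
    and closed: "\<And>a g. a \<noteq> 0 \<Longrightarrow> g \<in> N \<Longrightarrow> smult3 a g \<in> N"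
    and free: "\<And>g. g \<in> N \<Longrightarrow> snd (snd g) \<noteq> (\<lambda>_. 0)"
    and invariant: "\<And>a g. a \<noteq> 0 \<Longrightarrow> g \<in> N \<Longrightarrow> Q (smult3 a g) \<longleftrightarrow> Q g"
  shows "card {g\<in>N. Q g} = (CARD('a) - 1) * card {g\<in>Nbar. Q g}"
proof -
  have sub: "Nbar \<subseteq> N" using rep by (rule projective_rep_subset)
  have "bij_betw (\<lambda>(y, a). smult3 a y) ({y\<in>Nbar. Q y} \<times> (UNIV - {0})) {g\<in>N. Q g}"
  proof (rule bij_betw_imageI)
    note key = projective_rep_smult3_eq[OF rep free]
    show "inj_on (\<lambda>(y, a). smult3 a y) ({y\<in>Nbar. Q y} \<times> (UNIV - {0}))"
    proof (rule inj_onI)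
      fix p p' assume "p \<in> {y\<in>Nbar. Q y} \<times> (UNIV - {0})" "p' \<in> {y\<in>Nbar. Q y} \<times> (UNIV - {0})"
        and "(\<lambda>(y, a). smult3 a y) p = (\<lambda>(y, a). smult3 a y) p'"
      moreover obtain y a y' b where "p = (y, a)" "p' = (y', b)" by (cases p, cases p')
      ultimately show "p = p'" using key[of y y' a b] by auto
    qed
    show "(\<lambda>(y, a). smult3 a y) ` ({y\<in>Nbar. Q y} \<times> (UNIV - {0})) = {g\<in>N. Q g}"
    proof (intro equalityI subsetI)
      fix g assume "g \<in> (\<lambda>(y, a). smult3 a y) ` ({y\<in>Nbar. Q y} \<times> (UNIV - {0}))"
      then show "g \<in> {g\<in>N. Q g}" using closed invariant sub by auto
    next
      fix g assume g: "g \<in> {g\<in>N. Q g}"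
      then obtain a where a: "a \<noteq> 0" "smult3 a g \<in> Nbar" using projective_repE[OF rep] by blast
      then have "g = smult3 (inverse a) (smult3 a g)" "Q (smult3 a g)" using g invariant by auto
      with a show "g \<in> (\<lambda>(y, a). smult3 a y) ` ({y\<in>Nbar. Q y} \<times> (UNIV - {0}))"
        by (intro image_eqI[where x = "(smult3 a g, inverse a)"]) auto
    qed
  qed
  then show ?thesis
    by (simp add: bij_betw_same_card[symmetric] card_cartesian_product card_Diff_singleton)
qed

section \<open>A parametrization of \<open>N4\<close>\<close>

type_synonym 'a N4_param = "(nat \<Rightarrow> 'a) \<times> (nat \<Rightarrow> 'a) \<times> (nat \<Rightarrow> 'a) \<times> bool"

fun N4_elem :: "('a::ring_1) N4_param \<Rightarrow> 'a vec3" where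
  "N4_elem (w1, w2, w3, e) = ((\<lambda>i. w2 i + (if e then w1 i else 0)), w3, w1)"

declare N4_elem.simps [simp del]

definition N4_params ::
    "nat \<Rightarrow> nat set \<Rightarrow> nat set \<Rightarrow> nat set \<Rightarrow> ('a::ring_1) N4_param set" where
  "N4_params m A B C = Delta_star m A \<times> Delta m B \<times> Delta_c m C \<times> UNIV"

lemma N4_eq_image: "N4 m A B C = (N4_elem ` N4_params m A B C :: ('a::ring_1) vec3 set)"
proof (intro equalityI subsetI)
  fix g :: "'a vec3" assume "g \<in> N4 m A B C"
  then have "\<exists>w1 w2 w3 \<omega>. g = ((\<lambda>i. w2 i + \<omega> i), w3, w1) \<and> w1 \<in> Delta_star m A
      \<and> w2 \<in> Delta m B \<and> w3 \<in> Delta_c m C \<and> \<omega> \<in> {(\<lambda>_. 0), w1}"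
    unfolding N4_def by (simp only: mem_Collect_eq)
  then obtain w1 w2 w3 \<omega> where g: "g = ((\<lambda>i. w2 i + \<omega> i), w3, w1)"
    and w: "w1 \<in> Delta_star m A" "w2 \<in> Delta m B" "w3 \<in> Delta_c m C" "\<omega> \<in> {(\<lambda>_. 0), w1}"
    by (elim exE conjE) (rule that)
  have "w1 \<noteq> (\<lambda>_. 0)" using w(1) by (simp add: Delta_star_def)
  with g w(4) have "g = N4_elem (w1, w2, w3, \<omega> = w1)" by (auto simp: N4_elem.simps)
  with w(1-3) show "g \<in> N4_elem ` N4_params m A B C"
    unfolding N4_params_def by (intro image_eqI[where x = "(w1, w2, w3, \<omega> = w1)"]) auto
next
  fix g :: "'a vec3" assume "g \<in> N4_elem ` N4_params m A B C"
  then obtain w1 w2 w3 e where "g = N4_elem (w1, w2, w3, e)"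
    and "w1 \<in> Delta_star m A" "w2 \<in> Delta m B" "w3 \<in> Delta_c m C"
    by (auto simp: N4_params_def)
  then show "g \<in> N4 m A B C"
    unfolding N4_def N4_elem.simps by (intro CollectI exI[of _ w1] exI[of _ w2] exI[of _ w3]
        exI[of _ "if e then w1 else (\<lambda>_. 0)"]) auto
qed

lemma N4_elem_in_N4:
  "w1 \<in> Delta_star m A \<Longrightarrow> w2 \<in> Delta m B \<Longrightarrow> w3 \<in> Delta_c m C
    \<Longrightarrow> N4_elem (w1, w2, w3, e) \<in> N4 m A B C"
  unfolding N4_eq_image N4_params_def by (rule image_eqI[where x = "(w1, w2, w3, e)"]) auto

lemma N4E:
  assumes "g \<in> N4 m A B C"
  obtains w1 w2 w3 e where "g = N4_elem (w1, w2, w3, e)"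
    and "w1 \<in> Delta_star m A" "w2 \<in> Delta m B" "w3 \<in> Delta_c m C"
  using assms by (auto simp: N4_eq_image N4_params_def)

text \<open>Disjointness of \<open>A\<close> and \<open>B\<close> lets one read off \<open>e\<close> at a coordinate \<open>j \<in> A\<close>
  where \<open>w1 j \<noteq> 0\<close>.\<close>

lemma inj_on_N4_elem:
  assumes "A \<inter> B = {}"
  shows "inj_on N4_elem (N4_params m A B C :: ('a::ring_1) N4_param set)"
proof (rule inj_onI)
  fix p p' :: "'a N4_param"
  assume "p \<in> N4_params m A B C" "p' \<in> N4_params m A B C" and "N4_elem p = N4_elem p'"
  moreover obtain w1 w2 w3 e v1 v2 v3 f where pp: "p = (w1, w2, w3, e)" "p' = (v1, v2, v3, f)"
    using prod_cases4[of p] prod_cases4[of p'] by metis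
  ultimately have p: "(w1, w2, w3, e) \<in> N4_params m A B C" "(v1, v2, v3, f) \<in> N4_params m A B C"
    and eq: "N4_elem (w1, w2, w3, e) = N4_elem (v1, v2, v3, f)"
    unfolding pp by auto
  then have "w1 = v1" "w3 = v3" and first: "\<And>i. w2 i + (if e then w1 i else 0) = v2 i + (if f then w1 i else 0)"
    by (auto simp: N4_elem.simps fun_eq_iff)
  obtain j where j: "j \<in> A" "w1 j \<noteq> 0" using p(1) by (auto simp: N4_params_def elim: Delta_starE)
  have "w2 j = 0" "v2 j = 0" using p j assms by (auto simp: N4_params_def intro: Delta_vanishes)
  then have "e = f" using first[of j] j(2) by (auto split: if_splits)
  with first have "w2 = v2" by (auto simp: fun_eq_iff)
  with \<open>w1 = v1\<close> \<open>w3 = v3\<close> \<open>e = f\<close> show "p = p'" unfolding pp by simp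
qed

lemma finite_N4_params: "finite (N4_params m A B C :: ('a::{finite,ring_1}) N4_param set)"
  by (simp add: N4_params_def finite_Delta_star finite_Delta finite_Delta_c)

lemma finite_N4: "finite (N4 m A B C :: ('a::{finite,ring_1}) vec3 set)"
  by (simp add: N4_eq_image finite_N4_params)

lemma card_N4:
  assumes "A \<inter> B = {}" "A \<subseteq> {1..m}" "B \<subseteq> {1..m}" "C \<subseteq> {1..m}"
  shows "card (N4 m A B C :: ('a::{finite,ring_1}) vec3 set)
    = 2 * (CARD('a) ^ m - CARD('a) ^ card C) * (CARD('a) ^ card A - 1) * CARD('a) ^ card B"
proof -
  have "card (N4 m A B C :: 'a vec3 set) = card (N4_params m A B C :: 'a N4_param set)"
    unfolding N4_eq_image using inj_on_N4_elem[OF assms(1)] by (rule card_image)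
  with assms(2-4) show ?thesis
    by (simp add: N4_params_def card_cartesian_product card_Delta_star card_Delta card_Delta_c)
qed

lemma smult3_N4_elem:
  "smult3 a (N4_elem (w1, w2, w3, e)) = N4_elem ((\<lambda>i. a * w1 i), (\<lambda>i. a * w2 i), (\<lambda>i. a * w3 i), e)"
  by (simp add: N4_elem.simps smult3_def fun_eq_iff algebra_simps)

lemma smult3_in_N4:
  assumes "(a::'a::field) \<noteq> 0" "g \<in> N4 m A B C"
  shows "smult3 a g \<in> N4 m A B C"
  using assms(2)
proof (rule N4E)
  fix w1 w2 w3 e
  assume "g = N4_elem (w1, w2, w3, e)" "w1 \<in> Delta_star m A" "w2 \<in> Delta m B" "w3 \<in> Delta_c m C"
  with assms(1) show ?thesis
    unfolding \<open>g = _\<close> smult3_N4_elem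
    by (intro N4_elem_in_N4) (simp_all add: scale_in_Delta_star_iff scale_in_Delta_iff scale_in_Delta_c_iff)
qed

lemma N4_third_nonzero: "g \<in> N4 m A B C \<Longrightarrow> snd (snd g) \<noteq> (\<lambda>_. 0)"
  by (auto elim!: N4E simp: N4_elem.simps Delta_star_def)

lemma dot3_N4_elem:
  "dot3 m (a, b, c) (N4_elem (w1, w2, w3, e))
    = dotv m a w2 + (if e then dotv m a w1 else 0) + dotv m b w3 + dotv m c w1"
  by (cases e) (simp_all add: N4_elem.simps dot3_eq_dotv dotv_add_left dotv_def sum.distrib algebra_simps)

lemma card_filter_N4:
  fixes Q :: "('a::{finite,ring_1}) vec3 \<Rightarrow> bool"
  assumes "A \<inter> B = {}"
  shows "card {g\<in>N4 m A B C. Q g} = (\<Sum>w1\<in>Delta_star m A. \<Sum>w2\<in>Delta m B. \<Sum>w3\<in>Delta_c m C.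
      of_bool (Q (N4_elem (w1, w2, w3, False))) + of_bool (Q (N4_elem (w1, w2, w3, True))))"
proof -
  have "{g\<in>N4 m A B C. Q g} = N4_elem ` {p\<in>N4_params m A B C. Q (N4_elem p)}"
    unfolding N4_eq_image by auto
  moreover have "inj_on N4_elem {p\<in>N4_params m A B C. Q (N4_elem p)}"
    by (rule inj_on_subset[OF inj_on_N4_elem[OF assms]]) auto
  ultimately have "card {g\<in>N4 m A B C. Q g} = card {p\<in>N4_params m A B C. Q (N4_elem p)}"
    by (simp add: card_image)
  also have "\<dots> = (\<Sum>p\<in>N4_params m A B C. of_bool (Q (N4_elem p)))"
    by (simp add: finite_N4_params Int_def)
  also have "\<dots> = (\<Sum>w1\<in>Delta_star m A. \<Sum>w2\<in>Delta m B. \<Sum>w3\<in>Delta_c m C. \<Sum>e\<in>UNIV.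
      of_bool (Q (N4_elem (w1, w2, w3, e))))"
    by (simp add: N4_params_def sum.cartesian_product split_def del: sum_of_bool_eq)
  also have "\<dots> = (\<Sum>w1\<in>Delta_star m A. \<Sum>w2\<in>Delta m B. \<Sum>w3\<in>Delta_c m C.
      of_bool (Q (N4_elem (w1, w2, w3, False))) + of_bool (Q (N4_elem (w1, w2, w3, True))))"
    by (intro sum.cong refl) (simp add: UNIV_bool)
  finally show ?thesis .
qed

section \<open>Weights of codewords\<close>

lemma power_diff_power_pred: "0 < n \<Longrightarrow> (q::nat) ^ n - q ^ (n - 1) = (q - 1) * q ^ (n - 1)"
  by (cases n) (simp_all add: diff_mult_distrib)

lemma power_add_pred_right: "0 < b \<Longrightarrow> (q::nat) ^ (a + b - 1) = q ^ a * q ^ (b - 1)"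
  by (simp add: power_add[symmetric])

lemma power_add_pred_left: "0 < a \<Longrightarrow> (q::nat) ^ (a + b - 1) = q ^ (a - 1) * q ^ b"
  by (simp add: power_add[symmetric])

lemma power_le_double_pred: "2 \<le> (q::nat) \<Longrightarrow> 0 < n \<Longrightarrow> q ^ n \<le> 2 * (q ^ n - 1)"
  using power_increasing[of 1 n q] by simp

lemma two_le_power_diff_power_pred:
  assumes "2 \<le> (q::nat)" "2 \<le> n"
  shows "2 \<le> q ^ n - q ^ (n - 1)"
proof -
  have "q ^ 1 \<le> q ^ (n - 1)" using assms by (intro power_increasing) auto
  with assms show ?thesis
    using power_diff_power_pred[of n q] mult_le_mono[of 1 "q - 1" 2 "q ^ (n - 1)"] by simp
qed

lemma two_le_card_field: "2 \<le> CARD('a::{finite,field})"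
proof -
  have "card {0::'a, 1} \<le> CARD('a)" by (rule card_mono) auto
  then show ?thesis by simp
qed

lemma sum3_lower_bound:
  fixes G :: "'x \<Rightarrow> 'y \<Rightarrow> 'z \<Rightarrow> nat"
  assumes "\<And>x y. x \<in> X \<Longrightarrow> y \<in> Y \<Longrightarrow> L \<le> (\<Sum>z\<in>Z. G x y z)"
  shows "card X * card Y * L \<le> (\<Sum>x\<in>X. \<Sum>y\<in>Y. \<Sum>z\<in>Z. G x y z)"
proof -
  have "(\<Sum>x\<in>X. \<Sum>y\<in>Y. L) \<le> (\<Sum>x\<in>X. \<Sum>y\<in>Y. \<Sum>z\<in>Z. G x y z)"
    by (intro sum_mono) (use assms in auto)
  then show ?thesis by (simp add: mult.assoc)
qed

lemma card_filter_Delta_star: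
  "card {w\<in>Delta_star m P. Q w} + of_bool (Q (\<lambda>_. 0)) = card {w\<in>Delta m P :: (nat \<Rightarrow> 'a::{finite,zero}) set. Q w}"
proof -
  have "{w\<in>Delta m P. Q w}
      = (if Q (\<lambda>_. 0) then insert (\<lambda>_. 0) {w\<in>Delta_star m P. Q w} else {w\<in>Delta_star m P. Q w})"
    using zero_in_Delta by (auto simp: Delta_star_def)
  then show ?thesis
    by (simp add: finite_Delta Delta_star_def)
qed

text \<open>On all of \<open>Delta m A\<close> a nonconstant form has \<open>q^|A| - q^(|A|-1)\<close> nonzeros. Removing
  the zero vector loses one nonzero of each form only if \<open>k \<noteq> 0\<close>, and then the other form still
  has at least two.\<close>

lemma card_pair_affine_nonzero:
  fixes l0 l1 :: "nat \<Rightarrow> 'a::{finite,field}"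
  assumes A: "A \<subseteq> {1..m}" and card_A: "2 \<le> card A"
    and nonconst: "(\<exists>i\<in>A. l0 i \<noteq> 0) \<or> (\<exists>i\<in>A. l1 i \<noteq> 0)"
  shows "CARD('a) ^ card A - CARD('a) ^ (card A - 1) \<le>
    card {w\<in>Delta_star m A. dotv m l0 w + k \<noteq> 0} + card {w\<in>Delta_star m A. dotv m l1 w + k \<noteq> 0}"
proof -
  let ?T = "CARD('a) ^ card A - CARD('a) ^ (card A - 1)"
  define Y where "Y l = card {w\<in>Delta m A :: (nat \<Rightarrow> 'a) set. dotv m l w + k \<noteq> 0}" for l
  have star: "card {w\<in>Delta_star m A. dotv m l w + k \<noteq> 0} + of_bool (k \<noteq> 0) = Y l" for l
    using card_filter_Delta_star[of m A "\<lambda>w. dotv m l w + k \<noteq> 0"] by (simp add: Y_def)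
  have T2: "2 \<le> ?T" using two_le_card_field card_A by (rule two_le_power_diff_power_pred)
  have Y_nonconst: "Y l = ?T" if "\<exists>i\<in>A. l i \<noteq> 0" for l
    using that card_affine_nonzero[OF A] by (auto simp: Y_def)
  have Y_const: "Y l = (if k = 0 then 0 else CARD('a) ^ card A)" if "\<not> (\<exists>i\<in>A. l i \<noteq> 0)" for l
    using that card_affine_nonzero_const[OF A, of l k] by (simp add: Y_def)
  have Y2: "2 \<le> Y l" if "k \<noteq> 0" for l
  proof (cases "\<exists>i\<in>A. l i \<noteq> 0")
    case True
    then show ?thesis using Y_nonconst T2 by simp
  next
    case False
    have "?T \<le> CARD('a) ^ card A" by simp
    with False show ?thesis using Y_const T2 that by simp
  qed
  have one_exact: "Y l0 = ?T \<or> Y l1 = ?T" using nonconst Y_nonconst by blast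
  show ?thesis
  proof (cases "k = 0")
    case True
    then show ?thesis using star[of l0] star[of l1] one_exact by auto
  next
    case False
    then have "card {w\<in>Delta_star m A. dotv m l0 w + k \<noteq> 0} + 1 = Y l0"
      "card {w\<in>Delta_star m A. dotv m l1 w + k \<noteq> 0} + 1 = Y l1"
      using star[of l0] star[of l1] by simp_all
    with one_exact Y2[OF False, of l0] Y2[OF False, of l1] show ?thesis by linarith
  qed
qed

lemma card_affine_nonzero_Delta_c:
  fixes b :: "nat \<Rightarrow> 'a::{finite,field}"
  assumes C: "C \<subseteq> {1..m}" "C \<noteq> {}" and i: "i \<in> {1..m}" "b i \<noteq> 0"
  shows "(CARD('a) - 1) * (CARD('a) ^ m - CARD('a) ^ card C)
    \<le> CARD('a) * card {w\<in>Delta_c m C. dotv m b w \<noteq> 0}"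
proof -
  let ?q = "CARD('a)"
  have m: "0 < m" and cC: "0 < card C" using i C finite_subset[OF C(1)] by (auto simp: card_gt_0_iff)
  have F: "card {w\<in>fvec m :: (nat \<Rightarrow> 'a) set. dotv m b w \<noteq> 0} = (?q - 1) * ?q ^ (m - 1)"
    using card_affine_nonzero[of "{1..m}" m i b 0] i power_diff_power_pred[OF m]
    by (simp add: fvec_eq_Delta)
  have D: "card {w\<in>Delta m C :: (nat \<Rightarrow> 'a) set. dotv m b w \<noteq> 0} \<le> (?q - 1) * ?q ^ (card C - 1)"
  proof (cases "\<exists>j\<in>C. b j \<noteq> 0")
    case True
    then obtain j where "j \<in> C" "b j \<noteq> 0" by blast
    then show ?thesis
      using card_affine_nonzero[OF C(1), of j b 0] power_diff_power_pred[OF cC] by simp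
  next
    case False
    then show ?thesis using card_affine_nonzero_const[OF C(1), of b 0] by simp
  qed
  have "(?q - 1) * ?q ^ (m - 1) - (?q - 1) * ?q ^ (card C - 1) \<le> card {w\<in>Delta_c m C. dotv m b w \<noteq> 0}"
    unfolding card_filter_Delta_c F by (rule diff_le_mono2[OF D])
  then have "(?q - 1) * (?q ^ (m - 1) - ?q ^ (card C - 1)) \<le> card {w\<in>Delta_c m C. dotv m b w \<noteq> 0}"
    unfolding diff_mult_distrib2 .
  then have "?q * ((?q - 1) * (?q ^ (m - 1) - ?q ^ (card C - 1))) \<le> ?q * card {w\<in>Delta_c m C. dotv m b w \<noteq> 0}"
    by (rule mult_le_mono2)
  moreover have "?q * (?q ^ (m - 1) - ?q ^ (card C - 1)) = ?q ^ m - ?q ^ card C"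
    unfolding diff_mult_distrib2 power_minus_mult[OF m, symmetric] power_minus_mult[OF cC, symmetric]
    by (simp only: mult.commute)
  ultimately show ?thesis by (simp only: mult.left_commute[of ?q "?q - 1"])
qed

definition coord :: "nat \<times> nat \<Rightarrow> ('a::zero) vec3 \<Rightarrow> 'a" where
  "coord = (\<lambda>(k, j) x. if k = 1 then fst x j else if k = 2 then fst (snd x) j else snd (snd x) j)"

lemma dot3_smult3: "dot3 m x (smult3 a g) = a * dot3 m x g"
  by (simp add: dot3_def smult3_def sum_distrib_left algebra_simps)

locale N4_code =
  fixes m :: nat and A B C :: "nat set" and Nbar :: "('a::{finite,field}) vec3 set" and q :: nat
  assumes field_size: "CARD('a) = q"
    and A_sub: "A \<subseteq> {1..m}" and B_sub: "B \<subseteq> {1..m}" and C_sub: "C \<subseteq> {1..m}"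
    and disjoint: "A \<inter> B = {}" and two_le_card_A: "2 \<le> card A"
    and B_ne: "B \<noteq> {}" and C_ne: "C \<noteq> {}" and C_proper: "C \<noteq> {1..m}"
    and rep: "is_projective_rep (N4 m A B C) Nbar"
begin

abbreviation N :: "'a vec3 set" where "N \<equiv> N4 m A B C"

definition min_weight :: nat where
  "min_weight = (q ^ m - q ^ card C) * q ^ (card A + card B - 1)"

text \<open>The codeword of \<open>x\<close> depends only on the coordinates of \<open>x\<close> in this set,
  which therefore indexes a basis of the code.\<close>

definition coords :: "(nat \<times> nat) set" where
  "coords = {1} \<times> (A \<union> B) \<union> {2} \<times> {1..m} \<union> {3} \<times> A"

lemma Nbar_subset: "Nbar \<subseteq> N"
  using rep by (rule projective_rep_subset)

lemma finite_Nbar: "finite Nbar"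
  using Nbar_subset finite_N4 by (rule finite_subset)

lemma finite_A: "finite A"
  using A_sub by (rule finite_subset) simp

lemma finite_B: "finite B"
  using B_sub by (rule finite_subset) simp

lemma card_A_pos: "0 < card A"
  using two_le_card_A by simp

lemma card_B_pos: "0 < card B"
  using B_ne finite_B by (simp add: card_gt_0_iff)

lemma card_C_less: "card C < m"
  using psubset_card_mono[of "{1..m}" C] C_sub C_proper by auto

lemma min_weight_pos: "0 < min_weight"
proof -
  have "2 \<le> q" using two_le_card_field[where 'a='a] by (simp add: field_size)
  then have "q ^ card C < q ^ m" using card_C_less by (intro power_strict_increasing) auto
  with \<open>2 \<le> q\<close> show ?thesis by (simp add: min_weight_def)
qed

lemma card_filter_N_Nbar:
  assumes "\<And>a g. a \<noteq> 0 \<Longrightarrow> g \<in> N \<Longrightarrow> Q (smult3 a g) \<longleftrightarrow> Q g"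
  shows "card {g\<in>N. Q g} = (q - 1) * card {g\<in>Nbar. Q g}"
  unfolding field_size[symmetric] using rep smult3_in_N4 N4_third_nonzero assms by (rule card_filter_projective_rep)

abbreviation (input) nonzero_pair :: "'a vec3 \<Rightarrow> _ \<Rightarrow> _ \<Rightarrow> _ \<Rightarrow> nat" where
  "nonzero_pair x w1 w2 w3 \<equiv> of_bool (dot3 m x (N4_elem (w1, w2, w3, False)) \<noteq> 0)
    + of_bool (dot3 m x (N4_elem (w1, w2, w3, True)) \<noteq> 0)"

lemma weight_N_lower_if_first_on_B:
  assumes "i \<in> B" "a i \<noteq> 0"
  shows "(q - 1) * min_weight \<le> card {g\<in>N. dot3 m (a, b, c) g \<noteq> 0}"
proof -
  let ?q = "CARD('a)"
  have "(\<Sum>w2\<in>Delta m B. nonzero_pair (a, b, c) w1 w2 w3) = 2 * ((?q - 1) * ?q ^ (card B - 1))" for w1 w3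
    using card_affine_nonzero[of B m i a, OF B_sub assms] power_diff_power_pred[OF card_B_pos, of ?q]
    by (simp add: dot3_N4_elem sum.distrib finite_Delta Int_def add.assoc)
  then have "card (Delta_star m A :: (nat \<Rightarrow> 'a) set) * card (Delta_c m C :: (nat \<Rightarrow> 'a) set)
      * (2 * ((?q - 1) * ?q ^ (card B - 1)))
    \<le> (\<Sum>w1\<in>Delta_star m A. \<Sum>w3\<in>Delta_c m C. \<Sum>w2\<in>Delta m B. nonzero_pair (a, b, c) w1 w2 w3)"
    by (intro sum3_lower_bound) simp
  also have "\<dots> = card {g\<in>N. dot3 m (a, b, c) g \<noteq> 0}"
    unfolding card_filter_N4[OF disjoint] by (intro sum.cong refl sum.swap)
  finally have bound: "(?q ^ card A - 1) * (?q ^ m - ?q ^ card C) * (2 * ((?q - 1) * ?q ^ (card B - 1)))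
      \<le> card {g\<in>N. dot3 m (a, b, c) g \<noteq> 0}"
    by (simp add: card_Delta_star[OF A_sub] card_Delta_c[OF C_sub])
  have "(?q - 1) * ((?q ^ m - ?q ^ card C) * ?q ^ (card A + card B - 1))
      = ?q ^ card A * ((?q ^ m - ?q ^ card C) * ((?q - 1) * ?q ^ (card B - 1)))"
    unfolding power_add_pred_right[OF card_B_pos] by (simp add: ac_simps)
  also have "\<dots> \<le> (2 * (?q ^ card A - 1)) * ((?q ^ m - ?q ^ card C) * ((?q - 1) * ?q ^ (card B - 1)))"
    using power_le_double_pred[OF two_le_card_field card_A_pos] by (rule mult_le_mono1)
  also have "\<dots> = (?q ^ card A - 1) * (?q ^ m - ?q ^ card C) * (2 * ((?q - 1) * ?q ^ (card B - 1)))"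
    by (simp only: mult_ac)
  also note bound
  finally show ?thesis by (simp add: min_weight_def field_size)
qed

lemma weight_N_lower_if_on_A:
  assumes a_B: "\<forall>i\<in>B. a i = 0" and nonzero: "(\<exists>i\<in>A. a i \<noteq> 0) \<or> (\<exists>i\<in>A. c i \<noteq> 0)"
  shows "(q - 1) * min_weight \<le> card {g\<in>N. dot3 m (a, b, c) g \<noteq> 0}"
proof -
  let ?q = "CARD('a)"
  let ?T = "?q ^ card A - ?q ^ (card A - 1)"
  have nonconst: "(\<exists>i\<in>A. c i \<noteq> 0) \<or> (\<exists>i\<in>A. a i + c i \<noteq> 0)"
    using nonzero by force
  have "?T \<le> (\<Sum>w1\<in>Delta_star m A. nonzero_pair (a, b, c) w1 w2 w3)" if "w2 \<in> Delta m B" for w2 w3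
  proof -
    have "dotv m a w2 = 0" using dotv_Delta_eq_0[OF B_sub that] a_B by simp
    then have "nonzero_pair (a, b, c) w1 w2 w3 = of_bool (dotv m c w1 + dotv m b w3 \<noteq> 0)
        + of_bool (dotv m (\<lambda>i. a i + c i) w1 + dotv m b w3 \<noteq> 0)" for w1
      by (simp add: dot3_N4_elem dotv_add_left algebra_simps)
    then show ?thesis
      using card_pair_affine_nonzero[OF A_sub two_le_card_A nonconst, of "dotv m b w3"]
      by (simp add: sum.distrib finite_Delta_star Int_def)
  qed
  then have "card (Delta m B :: (nat \<Rightarrow> 'a) set) * card (Delta_c m C :: (nat \<Rightarrow> 'a) set) * ?T
    \<le> (\<Sum>w2\<in>Delta m B. \<Sum>w3\<in>Delta_c m C. \<Sum>w1\<in>Delta_star m A. nonzero_pair (a, b, c) w1 w2 w3)"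
    by (intro sum3_lower_bound)
  also have "\<dots> = (\<Sum>w2\<in>Delta m B. \<Sum>w1\<in>Delta_star m A. \<Sum>w3\<in>Delta_c m C. nonzero_pair (a, b, c) w1 w2 w3)"
    by (intro sum.cong refl sum.swap)
  also have "\<dots> = card {g\<in>N. dot3 m (a, b, c) g \<noteq> 0}"
    unfolding card_filter_N4[OF disjoint] by (rule sum.swap)
  finally show ?thesis
    using power_diff_power_pred[OF card_A_pos, of ?q] unfolding min_weight_def power_add_pred_left[OF card_A_pos]
    by (simp add: card_Delta[OF B_sub] card_Delta_c[OF C_sub] field_size mult_ac)
qed

lemma weight_N_lower_if_second:
  assumes a_AB: "\<forall>i\<in>A \<union> B. a i = 0" and c_A: "\<forall>i\<in>A. c i = 0" and b: "i \<in> {1..m}" "b i \<noteq> 0"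
  shows "(q - 1) * min_weight \<le> card {g\<in>N. dot3 m (a, b, c) g \<noteq> 0}"
proof -
  let ?q = "CARD('a)"
  let ?K = "card {w\<in>Delta_c m C :: (nat \<Rightarrow> 'a) set. dotv m b w \<noteq> 0}"
  have "(\<Sum>w3\<in>Delta_c m C. nonzero_pair (a, b, c) w1 w2 w3) = 2 * ?K"
    if "w1 \<in> Delta_star m A" "w2 \<in> Delta m B" for w1 w2
  proof -
    have "w1 \<in> Delta m A" using that(1) by (simp add: Delta_star_def)
    then have "dotv m a w1 = 0" "dotv m c w1 = 0" "dotv m a w2 = 0"
      using dotv_Delta_eq_0[OF A_sub] dotv_Delta_eq_0[OF B_sub that(2)] a_AB c_A by auto
    then show ?thesis by (simp add: dot3_N4_elem finite_Delta_c Int_def sum.distrib mult_2)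
  qed
  then have "card (Delta_star m A :: (nat \<Rightarrow> 'a) set) * card (Delta m B :: (nat \<Rightarrow> 'a) set) * (2 * ?K)
    \<le> card {g\<in>N. dot3 m (a, b, c) g \<noteq> 0}"
    unfolding card_filter_N4[OF disjoint] by (intro sum3_lower_bound) simp
  then have bound: "2 * (?q ^ card A - 1) * ?q ^ card B * ?K \<le> card {g\<in>N. dot3 m (a, b, c) g \<noteq> 0}"
    by (simp add: card_Delta_star[OF A_sub] card_Delta[OF B_sub] mult_ac)
  have "(?q - 1) * ((?q ^ m - ?q ^ card C) * ?q ^ (card A + card B - 1))
      = ((?q - 1) * (?q ^ m - ?q ^ card C)) * (?q ^ (card A - 1) * ?q ^ card B)"
    unfolding power_add_pred_left[OF card_A_pos] by (simp only: mult_ac)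
  also have "\<dots> \<le> (?q * ?K) * (?q ^ (card A - 1) * ?q ^ card B)"
    using card_affine_nonzero_Delta_c[of C m i b, OF C_sub C_ne b] by (rule mult_le_mono1)
  also have "\<dots> = ?q ^ card A * ?q ^ card B * ?K"
    unfolding power_minus_mult[OF card_A_pos, of ?q, symmetric] by (simp only: mult_ac)
  also have "\<dots> \<le> 2 * (?q ^ card A - 1) * ?q ^ card B * ?K"
    using power_le_double_pred[OF two_le_card_field card_A_pos] by (intro mult_le_mono1)
  also note bound
  finally show ?thesis by (simp add: min_weight_def field_size)
qed

lemma weight_N_lower:
  assumes "\<exists>i\<in>coords. coord i x \<noteq> 0"
  shows "(q - 1) * min_weight \<le> card {g\<in>N. dot3 m x g \<noteq> 0}"
proof -
  obtain a b c where x: "x = (a, b, c)" by (cases x)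
  have "(\<exists>i\<in>A \<union> B. a i \<noteq> 0) \<or> (\<exists>i\<in>{1..m}. b i \<noteq> 0) \<or> (\<exists>i\<in>A. c i \<noteq> 0)"
    using assms by (auto simp: coords_def coord_def x)
  then consider "\<exists>i\<in>B. a i \<noteq> 0"
    | "\<forall>i\<in>B. a i = 0" "(\<exists>i\<in>A. a i \<noteq> 0) \<or> (\<exists>i\<in>A. c i \<noteq> 0)"
    | "\<forall>i\<in>A \<union> B. a i = 0" "\<forall>i\<in>A. c i = 0" "\<exists>i\<in>{1..m}. b i \<noteq> 0"
    by blast
  then show ?thesis
    unfolding x by cases (blast intro: weight_N_lower_if_first_on_B weight_N_lower_if_on_A weight_N_lower_if_second)+
qed

lemma weight_lower:
  assumes "\<exists>i\<in>coords. coord i x \<noteq> 0"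
  shows "min_weight \<le> card {g\<in>Nbar. dot3 m x g \<noteq> 0}"
proof -
  have "card {g\<in>N. dot3 m x g \<noteq> 0} = (q - 1) * card {g\<in>Nbar. dot3 m x g \<noteq> 0}"
    by (rule card_filter_N_Nbar) (simp add: dot3_smult3)
  with weight_N_lower[OF assms] two_le_card_field[where 'a='a] show ?thesis by (simp add: field_size)
qed

end

section \<open>Minimum distance and dimension\<close>

global_interpretation function_space: vector_space "fscale :: 'a::field \<Rightarrow> ('b \<Rightarrow> 'a) \<Rightarrow> ('b \<Rightarrow> 'a)"
  by (rule vector_space_fscale)

definition codeword :: "nat \<Rightarrow> ('a::comm_ring_1) vec3 set \<Rightarrow> 'a vec3 \<Rightarrow> 'a vec3 \<Rightarrow> 'a" where
  "codeword m Nbar x = (\<lambda>g. if g \<in> Nbar then dot3 m x g else 0)"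

definition diff3 :: "('a::ring_1) vec3 \<Rightarrow> 'a vec3 \<Rightarrow> 'a vec3" where
  "diff3 x y = ((\<lambda>i. fst x i - fst y i), (\<lambda>i. fst (snd x) i - fst (snd y) i), (\<lambda>i. snd (snd x) i - snd (snd y) i))"

definition unit3 :: "nat \<times> nat \<Rightarrow> ('a::zero_neq_one) vec3" where
  "unit3 = (\<lambda>(k, j). (if k = 1 then unit_vec j else (\<lambda>_. 0),
    if k = 2 then unit_vec j else (\<lambda>_. 0), if k = 3 then unit_vec j else (\<lambda>_. 0)))"

lemma code_eq_image: "code m Nbar = codeword m Nbar ` (fvec m \<times> fvec m \<times> fvec m)"
  by (auto simp: code_def codeword_def)

lemma dot3_diff3: "dot3 m (diff3 x y) g = dot3 m x g - dot3 m y g"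
  by (simp add: dot3_def diff3_def sum_subtractf algebra_simps)

lemma codeword_diff3: "codeword m Nbar (diff3 x y) g = codeword m Nbar x g - codeword m Nbar y g"
  by (simp add: codeword_def dot3_diff3)

lemma coord_diff3: "coord i (diff3 x y) = coord i x - coord i y"
  by (simp add: coord_def diff3_def split: prod.splits)

lemma coord_zero3 [simp]: "coord i ((\<lambda>_. 0), (\<lambda>_. 0), (\<lambda>_. 0)) = 0"
  by (simp add: coord_def split: prod.splits)

lemma unit3_in_fvec3: "j \<in> {1..m} \<Longrightarrow> unit3 (k, j) \<in> fvec m \<times> fvec m \<times> fvec m"
  by (simp add: unit3_def unit_vec_in_fvec zero_in_Delta[THEN subsetD[OF Delta_subset_fvec]])

lemma dot3_unit3: "j \<in> {1..m} \<Longrightarrow> k \<in> {1, 2, 3} \<Longrightarrow> dot3 m (unit3 (k, j)) g = coord (k, j) g"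
  by (auto simp: unit3_def dot3_eq_dotv dotv_unit_vec coord_def)

lemma coord_unit3:
  "fst i \<in> {1, 2, 3} \<Longrightarrow> k \<in> {1, 2, 3} \<Longrightarrow> coord i (unit3 (k, j)) = (if i = (k, j) then 1 else 0)"
  by (auto simp: unit3_def coord_def unit_vec_def split: prod.splits)

lemma sum_fun_apply: "(\<Sum>i\<in>I. F i) g = (\<Sum>i\<in>I. F i g)"
  by (induction I rule: infinite_finite_induct) auto

context N4_code
begin

lemma finite_coords: "finite coords"
  by (simp add: coords_def finite_A finite_B)

lemma sum_coords:
  "(\<Sum>i\<in>coords. f i) = (\<Sum>j\<in>A \<union> B. f (1, j)) + (\<Sum>j\<in>{1..m}. f (2, j)) + (\<Sum>j\<in>A. f (3, j))"
proof -
  have row: "sum f ({k} \<times> S) = (\<Sum>j\<in>S. f (k, j))" for k :: nat and S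
  proof -
    have "{k} \<times> S = Pair k ` S" by auto
    then show ?thesis by (simp add: sum.reindex inj_on_def)
  qed
  have "sum f coords = sum f ({1} \<times> (A \<union> B) \<union> {2} \<times> {1..m}) + sum f ({3} \<times> A)"
    unfolding coords_def by (rule sum.union_disjoint) (auto simp: finite_A finite_B)
  also have "sum f ({1} \<times> (A \<union> B) \<union> {2} \<times> {1..m}) = sum f ({1} \<times> (A \<union> B)) + sum f ({2} \<times> {1..m})"
    by (rule sum.union_disjoint) (auto simp: finite_A finite_B)
  finally show ?thesis by (simp only: row)
qed

lemma card_coords: "card coords = m + 2 * card A + card B"
  using sum_coords[of "\<lambda>_. 1::nat"] card_Un_disjoint[OF finite_A finite_B disjoint]
  by (simp add: card_eq_sum[symmetric])

lemma dot3_coords: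
  assumes "g \<in> N"
  shows "dot3 m x g = (\<Sum>i\<in>coords. coord i x * coord i g)"
proof -
  obtain a b c where x: "x = (a, b, c)" by (cases x)
  obtain w1 w2 w3 e where g: "g = N4_elem (w1, w2, w3, e)"
    and w: "w1 \<in> Delta_star m A" "w2 \<in> Delta m B" "w3 \<in> Delta_c m C"
    using assms by (rule N4E)
  have AB: "A \<union> B \<subseteq> {1..m}" using A_sub B_sub by simp
  have w1: "w1 \<in> Delta m A" using w(1) by (simp add: Delta_star_def)
  have "fst g \<in> Delta m (A \<union> B)"
    using w1 w(2) A_sub B_sub AB by (auto simp: g N4_elem.simps Delta_eq)
  then have "dot3 m x g = (\<Sum>j\<in>A \<union> B. a j * fst g j) + (\<Sum>j\<in>{1..m}. b j * fst (snd g) j)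
      + (\<Sum>j\<in>A. c j * snd (snd g) j)"
    using dotv_Delta[OF AB, of "fst g" a] dotv_Delta[OF A_sub w1, of c]
    by (simp add: x dot3_eq_dotv g N4_elem.simps dotv_def)
  then show ?thesis
    by (simp add: sum_coords coord_def x)
qed

lemma codeword_eq_iff:
  "codeword m Nbar x = codeword m Nbar y \<longleftrightarrow> (\<forall>i\<in>coords. coord i x = coord i y)"
proof
  assume "\<forall>i\<in>coords. coord i x = coord i y"
  then show "codeword m Nbar x = codeword m Nbar y"
    using Nbar_subset by (auto simp: codeword_def fun_eq_iff dot3_coords)
next
  assume eq: "codeword m Nbar x = codeword m Nbar y"
  show "\<forall>i\<in>coords. coord i x = coord i y"
  proof (rule ccontr)
    assume "\<not> (\<forall>i\<in>coords. coord i x = coord i y)"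
    then have "\<exists>i\<in>coords. coord i (diff3 x y) \<noteq> 0" by (auto simp: coord_diff3)
    from weight_lower[OF this] min_weight_pos
    have "0 < card {g\<in>Nbar. dot3 m (diff3 x y) g \<noteq> 0}" by linarith
    then obtain g where "g \<in> Nbar" "dot3 m (diff3 x y) g \<noteq> 0"
      by (auto simp: card_gt_0_iff)
    then have "codeword m Nbar x g \<noteq> codeword m Nbar y g"
      using codeword_diff3[of m Nbar x y g] by (simp add: codeword_def)
    with eq show False by simp
  qed
qed

end

context N4_code
begin

lemma weight_unit_vec:
  assumes i: "i \<in> A"
  shows "card {g\<in>Nbar. dot3 m (unit_vec i, (\<lambda>_. 0), (\<lambda>_. 0)) g \<noteq> 0}
    = min_weight"
proof -
  let ?q = "CARD('a)"
  let ?x = "(unit_vec i, (\<lambda>_. 0), (\<lambda>_. 0)) :: 'a vec3"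
  have im: "i \<in> {1..m}" and iB: "i \<notin> B" using i A_sub disjoint by auto
  have "card {w\<in>Delta_star m A :: (nat \<Rightarrow> 'a) set. w i \<noteq> 0}
      = card {w\<in>Delta m A :: (nat \<Rightarrow> 'a) set. w i \<noteq> 0}"
    using card_filter_Delta_star[of m A "\<lambda>w. w i \<noteq> 0"] by simp
  also have "\<dots> = (?q - 1) * ?q ^ (card A - 1)"
  proof -
    have "unit_vec i i \<noteq> (0::'a)" by (simp add: unit_vec_def)
    then show ?thesis
      using card_affine_nonzero[of A m i "unit_vec i :: nat \<Rightarrow> 'a" 0] i A_sub power_diff_power_pred[OF card_A_pos]
      by (simp add: dotv_unit_vec[OF im])
  qed
  finally have A_count: "card {w\<in>Delta_star m A :: (nat \<Rightarrow> 'a) set. w i \<noteq> 0} = (?q - 1) * ?q ^ (card A - 1)" .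
  have "nonzero_pair ?x w1 w2 w3 = of_bool (w1 i \<noteq> 0)" if "w2 \<in> Delta m B" for w1 w2 w3
    using Delta_vanishes[OF that iB] by (simp add: dot3_N4_elem dotv_unit_vec[OF im])
  then have "card {g\<in>N. dot3 m ?x g \<noteq> 0}
      = (\<Sum>w1\<in>(Delta_star m A :: (nat \<Rightarrow> 'a) set).
          card (Delta m B :: (nat \<Rightarrow> 'a) set) * card (Delta_c m C :: (nat \<Rightarrow> 'a) set) * of_bool (w1 i \<noteq> 0))"
    unfolding card_filter_N4[OF disjoint] by (simp add: mult.assoc cong: sum.cong)
  also have "\<dots> = (?q - 1) * ((?q ^ m - ?q ^ card C) * ?q ^ (card A + card B - 1))"
    unfolding sum_distrib_left[symmetric] power_add_pred_left[OF card_A_pos]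
    by (simp add: finite_Delta_star Int_def A_count card_Delta[OF B_sub] card_Delta_c[OF C_sub] mult_ac)
  also have "card {g\<in>N. dot3 m ?x g \<noteq> 0} = (?q - 1) * card {g\<in>Nbar. dot3 m ?x g \<noteq> 0}"
    by (rule card_filter_N_Nbar[folded field_size]) (simp add: dot3_smult3)
  finally show ?thesis using two_le_card_field[where 'a='a] by (simp add: min_weight_def field_size)
qed

lemma hdist_codeword:
  "hdist Nbar (codeword m Nbar x) (codeword m Nbar y) = card {g\<in>Nbar. dot3 m (diff3 x y) g \<noteq> 0}"
  unfolding hdist_def codeword_def dot3_diff3 by (rule arg_cong[where f = card]) auto

lemma min_dist_code:
  "min_dist Nbar (code m Nbar) = min_weight"
proof -
  define S where "S = {hdist Nbar c c' | c c'. c \<in> code m Nbar \<and> c' \<in> code m Nbar \<and> c \<noteq> c'}"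
  have lower: "min_weight \<le> s" if s: "s \<in> S" for s
  proof -
    obtain x y where s: "s = hdist Nbar (codeword m Nbar x) (codeword m Nbar y)"
      and ne: "codeword m Nbar x \<noteq> codeword m Nbar y"
      using s unfolding S_def code_eq_image by blast
    then have "\<exists>i\<in>coords. coord i (diff3 x y) \<noteq> 0"
      by (auto simp: codeword_eq_iff coord_diff3)
    then show ?thesis unfolding s hdist_codeword by (rule weight_lower)
  qed
  obtain i where i: "i \<in> A" using card_A_pos by (auto simp: card_gt_0_iff)
  let ?x = "(unit_vec i, (\<lambda>_. 0), (\<lambda>_. 0)) :: 'a vec3"
  let ?z = "((\<lambda>_. 0), (\<lambda>_. 0), (\<lambda>_. 0)) :: 'a vec3"
  have "i \<in> {1..m}" using i A_sub by auto
  then have x: "?x \<in> fvec m \<times> fvec m \<times> fvec m" and z: "?z \<in> fvec m \<times> fvec m \<times> fvec m"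
    using unit_vec_in_fvec[of i m] by (simp_all add: fvec_def)
  have "diff3 ?x ?z = ?x" by (simp add: diff3_def)
  then have d: "hdist Nbar (codeword m Nbar ?x) (codeword m Nbar ?z) = min_weight"
    by (simp add: hdist_codeword weight_unit_vec[OF i])
  then have "codeword m Nbar ?x \<noteq> codeword m Nbar ?z"
    using min_weight_pos by (auto simp: hdist_def)
  with d x z have "min_weight \<in> S"
    unfolding S_def code_eq_image
    by (intro CollectI exI[of _ "codeword m Nbar ?x"] exI[of _ "codeword m Nbar ?z"]) auto
  moreover have "finite S"
    by (rule finite_subset[of _ "{..card Nbar}"]) (auto simp: S_def hdist_def intro: card_mono finite_Nbar)
  ultimately have "Min S = min_weight" using lower by (intro Min_eqI) auto
  then show ?thesis by (simp add: min_dist_def S_def)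
qed

end

context N4_code
begin

lemma coords_subset: "coords \<subseteq> {1, 2, 3} \<times> {1..m}"
  using A_sub B_sub by (auto simp: coords_def)

lemma codeword_eq_sum_unit3:
  "codeword m Nbar x = (\<Sum>i\<in>coords. fscale (coord i x) (codeword m Nbar (unit3 i)))"
proof
  fix g
  have "dot3 m x g = (\<Sum>i\<in>coords. coord i x * dot3 m (unit3 i) g)" if "g \<in> Nbar"
  proof -
    have "dot3 m (unit3 i) g = coord i g" if "i \<in> coords" for i
      using that coords_subset by (cases i) (auto intro!: dot3_unit3)
    moreover have "g \<in> N" using Nbar_subset \<open>g \<in> Nbar\<close> by blast
    ultimately show ?thesis by (simp add: dot3_coords)
  qed
  then show "codeword m Nbar x g = (\<Sum>i\<in>coords. fscale (coord i x) (codeword m Nbar (unit3 i))) g"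
    by (simp add: sum_fun_apply fscale_def codeword_def)
qed

lemma inj_on_codeword_unit3: "inj_on (\<lambda>i. codeword m Nbar (unit3 i)) coords"
proof (rule inj_onI)
  fix i i' assume i: "i \<in> coords" "i' \<in> coords"
    and "codeword m Nbar (unit3 i) = codeword m Nbar (unit3 i')"
  then have "\<forall>k\<in>coords. coord k (unit3 i :: 'a vec3) = coord k (unit3 i')" by (simp add: codeword_eq_iff)
  with i(1) have "coord i (unit3 i :: 'a vec3) = coord i (unit3 i')" by blast
  moreover obtain k j k' j' where "i = (k, j)" "i' = (k', j')" "k \<in> {1, 2, 3}" "k' \<in> {1, 2, 3}"
    using i coords_subset by blast
  ultimately show "i = i'" by (simp add: coord_unit3 split: if_splits)
qed

lemma span_code:
  "function_space.span (code m Nbar) = function_space.span ((\<lambda>i. codeword m Nbar (unit3 i)) ` coords)"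
proof -
  let ?e = "\<lambda>i. codeword m Nbar (unit3 i)"
  have "codeword m Nbar x \<in> function_space.span (?e ` coords)" for x
    by (subst codeword_eq_sum_unit3)
      (intro function_space.span_sum function_space.span_scale function_space.span_base imageI)
  then have "code m Nbar \<subseteq> function_space.span (?e ` coords)"
    unfolding code_eq_image by blast
  moreover have "?e ` coords \<subseteq> code m Nbar"
    using coords_subset unfolding code_eq_image by (auto intro!: imageI unit3_in_fvec3)
  ultimately show ?thesis
    unfolding function_space.span_eq using function_space.span_superset[of "code m Nbar"] by blast
qed

lemma independent_codeword_unit3:
  "function_space.independent ((\<lambda>i. codeword m Nbar (unit3 i)) ` coords)"
proof (rule function_space.independent_if_scalars_zero)
  let ?e = "\<lambda>i. codeword m Nbar (unit3 i)"
  show "finite (?e ` coords)" using finite_coords by simp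
  fix f v assume sum: "(\<Sum>e\<in>?e ` coords. fscale (f e) e) = 0" and v: "v \<in> ?e ` coords"
  define x :: "'a vec3" where "x = ((\<lambda>j. f (?e (1, j))), (\<lambda>j. f (?e (2, j))), (\<lambda>j. f (?e (3, j))))"
  have coord_x: "coord i x = f (?e i)" if "i \<in> coords" for i
    using that coords_subset by (auto simp: coord_def x_def)
  have "codeword m Nbar x = (\<Sum>i\<in>coords. fscale (f (?e i)) (?e i))"
    by (subst codeword_eq_sum_unit3) (simp add: coord_x)
  also have "\<dots> = 0"
    using sum unfolding sum.reindex[OF inj_on_codeword_unit3] by (simp add: comp_def)
  also have "\<dots> = codeword m Nbar ((\<lambda>_. 0), (\<lambda>_. 0), (\<lambda>_. 0))"
    by (simp add: fun_eq_iff codeword_def dot3_def)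
  finally have "\<forall>i\<in>coords. f (?e i) = 0"
    unfolding codeword_eq_iff using coord_x by simp
  with v show "f v = 0" by blast
qed

lemma code_dim_eq: "code_dim (code m Nbar) = m + 2 * card A + card B"
proof -
  have "code_dim (code m Nbar) = function_space.dim (function_space.span (code m Nbar))"
    by (simp add: code_dim_def)
  also have "\<dots> = card ((\<lambda>i. codeword m Nbar (unit3 i)) ` coords)"
    using independent_codeword_unit3 by (simp add: span_code function_space.dim_eq_card_independent)
  finally show ?thesis by (simp add: card_image[OF inj_on_codeword_unit3] card_coords)
qed

end

section \<open>Locality\<close>

definition vsum3 :: "(nat \<Rightarrow> ('a::comm_monoid_add) vec3) \<Rightarrow> nat \<Rightarrow> 'a vec3" where
  "vsum3 h n = ((\<lambda>i. \<Sum>j<n. fst (h j) i), (\<lambda>i. \<Sum>j<n. fst (snd (h j)) i), (\<lambda>i. \<Sum>j<n. snd (snd (h j)) i))"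

lemma vsum3_cong: "(\<And>j. j < n \<Longrightarrow> h j = h' j) \<Longrightarrow> vsum3 h n = vsum3 h' n"
  by (auto simp: vsum3_def fun_eq_iff intro!: sum.cong)

lemma sum_image_coeff:
  assumes "finite I"
  shows "(\<Sum>s\<in>r ` I. (\<Sum>j\<in>{j\<in>I. r j = s}. c j) * f s) = (\<Sum>j\<in>I. c j * (f (r j) :: 'a::semiring_0))"
proof -
  have "(\<Sum>j\<in>I. c j * f (r j)) = (\<Sum>s\<in>r ` I. \<Sum>j\<in>{j\<in>I. r j = s}. c j * f (r j))"
    using assms by (rule sum.image_gen)
  also have "\<dots> = (\<Sum>s\<in>r ` I. (\<Sum>j\<in>{j\<in>I. r j = s}. c j) * f s)"
    by (intro sum.cong refl) (auto simp: sum_distrib_right)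
  finally show ?thesis ..
qed

text \<open>Repeated columns among the \<open>r j\<close> are merged by adding up their coefficients.\<close>

lemma lin_comb3_vsum3: "lin_comb3 (r ` {..<n}) (vsum3 (\<lambda>j. smult3 (c j) (r j)) n)"
proof -
  define cc where "cc s = (\<Sum>j\<in>{j\<in>{..<n}. r j = s}. c j)" for s
  have "(\<Sum>s\<in>r ` {..<n}. cc s * f s) = (\<Sum>j<n. c j * f (r j))" for f :: "'a vec3 \<Rightarrow> 'a"
    unfolding cc_def by (rule sum_image_coeff) simp
  then show ?thesis
    unfolding lin_comb3_def vsum3_def smult3_def by (intro exI[of _ cc]) simp
qed

lemma smult3_third_eq_imp_one:
  assumes "smult3 a h = g" "snd (snd h) = snd (snd g)" "snd (snd g) \<noteq> (\<lambda>_. (0::'a::field))"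
  shows "a = 1"
proof -
  obtain j where j: "snd (snd g) j \<noteq> 0" using assms(3) by auto
  have "a * snd (snd g) j = snd (snd g) j"
    using arg_cong[where f = "\<lambda>x. snd (snd x) j", OF assms(1)] assms(2) by (simp add: smult3_def)
  with j show ?thesis by simp
qed

lemma not_smult3_if_third:
  "snd (snd g) j \<noteq> 0 \<Longrightarrow> snd (snd h) j = 0 \<Longrightarrow> g \<noteq> smult3 (a::'a::ring_1) h"
  by (auto simp: smult3_def)

text \<open>A vector outside \<open>Delta m C\<close> is the sum of two such vectors unless \<open>q = 2\<close> and it has a
  single coordinate outside \<open>C\<close>: split it as \<open>l w + (1 - l) w\<close> with \<open>l \<notin> {0, 1}\<close>, or as
  \<open>(w - e\<^sub>k) + e\<^sub>k\<close> with \<open>k\<close> a coordinate outside \<open>C\<close> other than one where \<open>w\<close> is nonzero.\<close>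

lemma Delta_c_split:
  fixes w :: "nat \<Rightarrow> 'a::{finite,field}"
  assumes "3 \<le> CARD('a) \<or> 2 \<le> card ({1..m} - C)" and w: "w \<in> Delta_c m C"
  obtains t1 t2 where "t1 \<in> Delta_c m C" "t2 \<in> Delta_c m C" "w = (\<lambda>i. t1 i + t2 i)"
proof (cases "3 \<le> CARD('a)")
  case True
  have "\<not> UNIV \<subseteq> {0::'a, 1}"
    using True card_mono[of "{0::'a, 1}" UNIV] by auto
  then obtain l :: 'a where l: "l \<noteq> 0" "l \<noteq> 1" by auto
  have "(\<lambda>i. l * w i) \<in> Delta_c m C" "(\<lambda>i. (1 - l) * w i) \<in> Delta_c m C"
    using l w by (simp_all add: scale_in_Delta_c_iff)
  moreover have "w = (\<lambda>i. l * w i + (1 - l) * w i)" by (simp add: algebra_simps)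
  ultimately show ?thesis by (rule that)
next
  case False
  then have two: "2 \<le> card ({1..m} - C)" using assms(1) by simp
  obtain j where j: "j \<in> {1..m}" "j \<notin> C" "w j \<noteq> 0" using w by (rule Delta_cE)
  have "0 < card ({1..m} - C - {j})" using two j by (simp add: card_Diff_singleton)
  then have "{1..m} - C - {j} \<noteq> {}" using card_gt_0_iff by blast
  then obtain k where k: "k \<in> {1..m}" "k \<notin> C" "k \<noteq> j" by blast
  have "(\<lambda>i. w i - unit_vec k i) \<in> Delta_c m C"
    using w j k by (intro Delta_cI[of _ _ j]) (auto simp: Delta_c_def fvec_def unit_vec_def)
  moreover have "unit_vec k \<in> Delta_c m C" using k(1,2) by (rule unit_vec_in_Delta_c)
  moreover have "w = (\<lambda>i. (w i - unit_vec k i) + unit_vec k i)" by simp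
  ultimately show ?thesis by (rule that)
qed

lemma two_element_field_cases:
  assumes "CARD('a::{finite,field}) = 2"
  shows "(x::'a) = 0 \<or> x = 1"
proof -
  have "{0::'a, 1} = UNIV"
    using assms by (intro card_subset_eq) auto
  then show ?thesis by auto
qed

lemma two_element_field_one_plus_one:
  assumes "CARD('a::{finite,field}) = 2"
  shows "(1::'a) + 1 = 0"
  by (metis add_cancel_left_right one_neq_zero two_element_field_cases[OF assms])

context N4_code
begin

lemma other_element_A:
  obtains k where "k \<in> A" "k \<noteq> j"
proof -
  have "\<not> A \<subseteq> {j}"
    using two_le_card_A card_mono[of "{j}" A] by auto
  then show ?thesis using that by blast
qed

lemma Nbar_elemE:
  assumes "g \<in> Nbar"
  obtains w1 w2 w3 e j k where "g = N4_elem (w1, w2, w3, e)"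
    and "w1 \<in> Delta_star m A" "w2 \<in> Delta m B" "w3 \<in> Delta_c m C"
    and "j \<in> A" "w1 j \<noteq> 0" "k \<in> A" "k \<noteq> j"
proof -
  from assms Nbar_subset have "g \<in> N" by blast
  then obtain w1 w2 w3 e where "g = N4_elem (w1, w2, w3, e)"
    and w: "w1 \<in> Delta_star m A" "w2 \<in> Delta m B" "w3 \<in> Delta_c m C"
    by (rule N4E)
  moreover obtain j where "j \<in> A" "w1 j \<noteq> 0" using w(1) by (rule Delta_starE)
  moreover obtain k where "k \<in> A" "k \<noteq> j" by (rule other_element_A)
  ultimately show ?thesis using that by blast
qed

lemma repairable_by_vsum3:
  assumes g: "g \<in> Nbar"
    and h: "\<And>j. j < n \<Longrightarrow> h j \<in> N"
    and not_multiple: "\<And>j a. j < n \<Longrightarrow> g \<noteq> smult3 a (h j)"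
    and sum: "g = vsum3 h n"
  shows "\<exists>S. S \<subseteq> Nbar - {g} \<and> card S \<le> n \<and> lin_comb3 S g"
proof -
  have "\<exists>a. a \<noteq> 0 \<and> smult3 a (h j) \<in> Nbar" if "j < n" for j
    using projective_repE[OF rep h[OF that]] by blast
  then obtain a where a: "\<And>j. j < n \<Longrightarrow> a j \<noteq> 0 \<and> smult3 (a j) (h j) \<in> Nbar" by metis
  define r where "r j = smult3 (a j) (h j)" for j
  have "h j = smult3 (inverse (a j)) (r j)" if "j < n" for j
    using a[OF that] by (simp add: r_def)
  then have "g = vsum3 (\<lambda>j. smult3 (inverse (a j)) (r j)) n"
    unfolding sum by (rule vsum3_cong)
  then have "lin_comb3 (r ` {..<n}) g" using lin_comb3_vsum3 by metis
  moreover have "r ` {..<n} \<subseteq> Nbar - {g}"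
    using a not_multiple by (auto simp: r_def)
  moreover have "card (r ` {..<n}) \<le> n"
    using card_image_le[of "{..<n}" r] by simp
  ultimately show ?thesis by blast
qed

lemma repairable_2:
  assumes "3 \<le> q \<or> 2 \<le> card ({1..m} - C)"
  shows "repairable_with Nbar 2"
  unfolding repairable_with_def
proof
  fix g assume g: "g \<in> Nbar"
  then obtain w1 w2 w3 e j k where g_eq: "g = N4_elem (w1, w2, w3, e)"
    and w: "w1 \<in> Delta_star m A" "w2 \<in> Delta m B" "w3 \<in> Delta_c m C"
    and j: "j \<in> A" "w1 j \<noteq> 0" and k: "k \<in> A" "k \<noteq> j"
    by (rule Nbar_elemE)
  obtain t1 t2 where t: "t1 \<in> Delta_c m C" "t2 \<in> Delta_c m C" "w3 = (\<lambda>i. t1 i + t2 i)"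
    using assms[folded field_size] w(3) by (rule Delta_c_split)
  define u where "u i = w1 i - unit_vec k i" for i
  define h where "h n = (if n = 0 then N4_elem (u, w2, t1, e) else N4_elem (unit_vec k, (\<lambda>_. 0), t2, e))"
    for n :: nat
  have "u \<in> Delta_star m A"
  proof (rule Delta_starI)
    show "u \<in> Delta m A"
      using w(1) k A_sub by (auto simp: u_def Delta_star_def Delta_eq unit_vec_def)
    show "u j \<noteq> 0" using j k by (simp add: u_def unit_vec_def)
  qed
  then have "h n \<in> N" if "n < 2" for n
    using w t k A_sub by (auto simp: h_def intro!: N4_elem_in_N4 unit_vec_in_Delta_star zero_in_Delta)
  moreover have "g \<noteq> smult3 a (h n)" if "n < 2" for n a
  proof (cases "n = 0")
    case True
    show ?thesis
    proof
      assume "g = smult3 a (h n)"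
      then have third: "w1 i = a * u i" for i
        using True by (simp add: g_eq h_def N4_elem.simps smult3_def fun_eq_iff)
      from third[of j] j k have "a = 1" by (simp add: u_def unit_vec_def)
      with third[of k] show False by (simp add: u_def unit_vec_def)
    qed
  next
    case False
    with j k show ?thesis
      by (intro not_smult3_if_third[of _ j]) (simp_all add: g_eq h_def N4_elem.simps unit_vec_def)
  qed
  moreover have "g = vsum3 h 2"
    by (simp add: g_eq h_def vsum3_def numeral_2_eq_2 N4_elem.simps t(3) u_def fun_eq_iff)
  ultimately show "\<exists>S. S \<subseteq> Nbar - {g} \<and> card S \<le> 2 \<and> lin_comb3 S g"
    using g by (intro repairable_by_vsum3) auto
qed

lemma repairable_3: "repairable_with Nbar 3"
  unfolding repairable_with_def
proof
  fix g assume g: "g \<in> Nbar"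
  then obtain w1 w2 w3 e j k where g_eq: "g = N4_elem (w1, w2, w3, e)"
    and w: "w1 \<in> Delta_star m A" "w2 \<in> Delta m B" "w3 \<in> Delta_c m C"
    and j: "j \<in> A" "w1 j \<noteq> 0" and k: "k \<in> A" "k \<noteq> j"
    by (rule Nbar_elemE)
  obtain c where c: "c \<in> C" using C_ne by blast
  obtain l where l: "l \<in> {1..m}" "l \<notin> C" using C_sub C_proper by blast
  obtain l' where l': "l' \<in> {1..m}" "l' \<notin> C" "w3 l' \<noteq> 0" using w(3) by (rule Delta_cE)
  have cm: "c \<in> {1..m}" using c C_sub by blast
  define h where "h n = (if n = 0 then N4_elem (w1, w2, (\<lambda>i. w3 i + unit_vec c i), e)
    else if n = 1 then N4_elem (unit_vec k, (\<lambda>_. 0), unit_vec l, False)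
    else N4_elem ((\<lambda>i. - unit_vec k i), (\<lambda>_. 0), (\<lambda>i. - unit_vec l i - unit_vec c i), False))"
    for n :: nat
  have "(\<lambda>i. w3 i + unit_vec c i) \<in> Delta_c m C"
    using w(3) l' c cm by (intro Delta_cI[of _ _ l']) (auto simp: Delta_c_def fvec_def unit_vec_def)
  moreover have "(\<lambda>i. - unit_vec l i - unit_vec c i :: 'a) \<in> Delta_c m C"
    using l c cm by (intro Delta_cI[of _ _ l]) (auto simp: fvec_def unit_vec_def)
  moreover have "(\<lambda>i. - unit_vec k i :: 'a) \<in> Delta_star m A"
    using unit_vec_in_Delta_star[OF k(1) A_sub] by (simp add: scale_in_Delta_star_iff[of "-1", simplified])
  ultimately have "h n \<in> N" if "n < 3" for n
    using w k l A_sub by (auto simp: h_def intro!: N4_elem_in_N4 unit_vec_in_Delta_star unit_vec_in_Delta_c zero_in_Delta)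
  moreover have "g \<noteq> smult3 a (h n)" if "n < 3" for n a
  proof (cases "n = 0")
    case True
    show ?thesis
    proof
      assume eq: "g = smult3 a (h n)"
      have "snd (snd g) \<noteq> (\<lambda>_. 0)" using g Nbar_subset N4_third_nonzero by blast
      with eq[symmetric] True have "a = 1"
        by (intro smult3_third_eq_imp_one[of a "h n" g]) (simp_all add: g_eq h_def N4_elem.simps)
      with eq True have "(\<lambda>i. w3 i + unit_vec c i) = w3"
        by (simp add: g_eq h_def N4_elem.simps)
      then have "w3 c + unit_vec c c = w3 c" by (rule fun_cong)
      then show False by (simp add: unit_vec_def)
    qed
  next
    case False
    with j k show ?thesis
      by (intro not_smult3_if_third[of _ j]) (simp_all add: g_eq h_def N4_elem.simps unit_vec_def)
  qed
  moreover have "g = vsum3 h 3"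
    by (simp add: g_eq h_def vsum3_def numeral_3_eq_3 N4_elem.simps fun_eq_iff)
  ultimately show "\<exists>S. S \<subseteq> Nbar - {g} \<and> card S \<le> 3 \<and> lin_comb3 S g"
    using g by (intro repairable_by_vsum3) auto
qed

lemma Nbar_nonempty: "Nbar \<noteq> {}"
proof -
  obtain k where "k \<in> A" using card_A_pos by (auto simp: card_gt_0_iff)
  moreover obtain l where "l \<in> {1..m}" "l \<notin> C" using C_sub C_proper by blast
  ultimately have "N4_elem (unit_vec k, (\<lambda>_. 0), unit_vec l, False) \<in> N"
    using A_sub by (intro N4_elem_in_N4 unit_vec_in_Delta_star unit_vec_in_Delta_c zero_in_Delta)
  then show ?thesis using projective_repE[OF rep] by blast
qed

lemma not_lin_comb3_of_at_most_one:
  assumes g: "g \<in> Nbar" and S: "S \<subseteq> Nbar - {g}" "card S \<le> 1" and comb: "lin_comb3 S g"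
  shows False
proof -
  obtain c where c: "g = ((\<lambda>i. \<Sum>s\<in>S. c s * fst s i), (\<lambda>i. \<Sum>s\<in>S. c s * fst (snd s) i),
      (\<lambda>i. \<Sum>s\<in>S. c s * snd (snd s) i))"
    using comb unfolding lin_comb3_def by blast
  have gN: "g \<in> N" using g Nbar_subset by blast
  then have third: "snd (snd g) \<noteq> (\<lambda>_. 0)" by (rule N4_third_nonzero)
  have "finite S" by (rule finite_subset[of _ Nbar]) (use S(1) finite_Nbar in auto)
  with S(2) consider "S = {}" | h where "S = {h}"
    by (metis card_0_eq card_1_singleton_iff le_SucE One_nat_def le_zero_eq)
  then show False
  proof cases
    case 1
    with c third show False by simp
  next
    case (2 h)
    then have g_eq: "g = smult3 (c h) h" using c by (simp add: smult3_def)
    with third have "c h \<noteq> 0" by (auto simp: smult3_def)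
    moreover have h: "h \<in> Nbar" "h \<noteq> g" using S(1) 2 by auto
    moreover have "h \<in> N" using h Nbar_subset by blast
    ultimately have "smult3 (c h) h = smult3 1 h"
      using g g_eq by (intro projective_rep_unique[OF rep]) auto
    with g_eq h show False by simp
  qed
qed

lemma not_repairable_1: "\<not> repairable_with Nbar 1"
proof
  assume "repairable_with Nbar 1"
  moreover obtain g where "g \<in> Nbar" using Nbar_nonempty by blast
  ultimately show False
    unfolding repairable_with_def using not_lin_comb3_of_at_most_one by blast
qed

lemma binary_middle_eq_one:
  assumes binary: "q = 2" and l: "{1..m} - C = {l}" and h: "h \<in> N"
  shows "fst (snd h) l = 1"
proof -
  obtain w1 w2 w3 e where "h = N4_elem (w1, w2, w3, e)"
    and "w1 \<in> Delta_star m A" "w2 \<in> Delta m B" "w3 \<in> Delta_c m C"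
    using h by (rule N4E)
  moreover obtain l' where "l' \<in> {1..m}" "l' \<notin> C" "w3 l' \<noteq> 0"
    using \<open>w3 \<in> Delta_c m C\<close> by (rule Delta_cE)
  ultimately show ?thesis
    using l two_element_field_cases[OF binary[folded field_size], of "w3 l"] by (auto simp: N4_elem.simps)
qed

text \<open>Over \<open>\<bbbF>\<^sub>2\<close> with a single coordinate \<open>l\<close> outside \<open>C\<close>, every element of \<open>N\<close> has
  \<open>1\<close> at position \<open>l\<close> of its middle block, so a combination of two columns equal to a third
  would need coefficients summing to \<open>1\<close>, i.e. one of them is the column itself.\<close>

lemma not_repairable_2_binary:
  assumes binary: "q = 2" and single: "card ({1..m} - C) = 1"
  shows "\<not> repairable_with Nbar 2"
proof
  assume rep2: "repairable_with Nbar 2"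
  obtain l where l: "{1..m} - C = {l}" using single by (auto simp: card_1_singleton_iff)
  obtain g where g: "g \<in> Nbar" using Nbar_nonempty by blast
  then obtain S where S: "S \<subseteq> Nbar - {g}" "card S \<le> 2" "lin_comb3 S g"
    using rep2 unfolding repairable_with_def by blast
  show False
  proof (cases "card S \<le> 1")
    case True
    with g S show False by (intro not_lin_comb3_of_at_most_one)
  next
    case False
    with S(2) have "card S = 2" by simp
    then obtain h1 h2 where S_eq: "S = {h1, h2}" "h1 \<noteq> h2"
      unfolding card_2_iff by blast
    obtain c where c: "g = ((\<lambda>i. \<Sum>s\<in>S. c s * fst s i), (\<lambda>i. \<Sum>s\<in>S. c s * fst (snd s) i),
        (\<lambda>i. \<Sum>s\<in>S. c s * snd (snd s) i))"
      using S(3) unfolding lin_comb3_def by blast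
    then have g_eq: "g = smult3 (c h1) h1 \<and> c h2 = 0 \<or> g = smult3 (c h2) h2 \<and> c h1 = 0 \<or>
        (c h1 = 1 \<and> c h2 = 1) \<or> (c h1 = 0 \<and> c h2 = 0)"
      using S_eq two_element_field_cases[OF binary[folded field_size], of "c h1"]
        two_element_field_cases[OF binary[folded field_size], of "c h2"]
      by (auto simp: smult3_def)
    have h: "h1 \<in> N" "h2 \<in> N" "h1 \<noteq> g" "h2 \<noteq> g" using S(1) S_eq Nbar_subset by auto
    have "fst (snd g) l = c h1 * fst (snd h1) l + c h2 * fst (snd h2) l"
      using c S_eq by simp
    moreover have "g \<in> N" using g Nbar_subset by blast
    ultimately have "1 = c h1 + c h2" using binary_middle_eq_one[OF binary l] h(1,2) by simp
    with g_eq h two_element_field_one_plus_one[OF binary[folded field_size]] show False by auto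
  qed
qed

end

context N4_code
begin

lemma code_length_eq:
  "code_length Nbar = 2 * (q ^ m - q ^ card C) * (q ^ card A - 1) * q ^ card B div (q - 1)"
proof -
  have "card N = (q - 1) * card Nbar"
    using card_filter_N_Nbar[of "\<lambda>_. True"] by simp
  then show ?thesis
    using card_N4[OF disjoint A_sub B_sub C_sub, where 'a='a] two_le_card_field[where 'a='a]
    by (simp add: code_length_def field_size)
qed

lemma has_locality_2:
  assumes "3 \<le> q \<or> 2 \<le> card ({1..m} - C)"
  shows "has_locality Nbar 2"
  using repairable_2[OF assms] not_repairable_1 by (auto simp: has_locality_def less_2_cases_iff)

lemma card_C_binary: "card ({1..m} - C) = 1 \<Longrightarrow> card C = m - 1"
  using card_Diff_subset[OF finite_subset[OF C_sub] C_sub] card_C_less by simp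

lemma code_length_binary:
  assumes "q = 2" "card ({1..m} - C) = 1"
  shows "code_length Nbar = (2 ^ card A - 1) * 2 ^ (m + card B)"
proof -
  have "0 < m" using card_C_less by simp
  then have "2 * (2 ^ m - 2 ^ (m - 1)) = (2::nat) ^ m"
    by (cases m) simp_all
  with assms show ?thesis
    by (simp add: code_length_eq card_C_binary power_add mult_ac)
qed

lemma min_dist_binary:
  assumes "q = 2" "card ({1..m} - C) = 1"
  shows "min_dist Nbar (code m Nbar) = 2 ^ (m + card A + card B - 2)"
proof -
  have "0 < m" using card_C_less by simp
  then have "(2 ^ m - 2 ^ (m - 1)) * 2 ^ (card A + card B - 1) = (2::nat) ^ (m - 1 + (card A + card B - 1))"
    by (cases m) (simp_all add: power_add)
  also have "m - 1 + (card A + card B - 1) = m + card A + card B - 2"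
    using \<open>0 < m\<close> card_A_pos by simp
  finally show ?thesis
    using assms unfolding min_dist_code min_weight_def by (simp add: card_C_binary)
qed

lemma has_locality_3_binary:
  assumes "q = 2" "card ({1..m} - C) = 1"
  shows "has_locality Nbar 3"
proof -
  have "r = 1 \<or> r = 2" if "0 < r" "r < 3" for r :: nat using that by auto
  then show ?thesis
    using repairable_3 not_repairable_1 not_repairable_2_binary[OF assms]
    by (auto simp: has_locality_def)
qed

end

theorem mainTheorem19:
  fixes m :: nat and A B C :: "nat set"
    and Nbar :: "('a::{finite,field}) vec3 set"
  defines "q \<equiv> card (UNIV :: 'a set)"
  assumes "m \<ge> 2"
    and "A \<subseteq> {1..m}" and "B \<subseteq> {1..m}" and "C \<subseteq> {1..m}"
    and "A \<noteq> {}" and "B \<noteq> {}" and "C \<noteq> {}"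
    and "A \<inter> B = {}" and "C \<noteq> {1..m}" and "card A \<ge> 2"
    and "is_projective_rep (N4 m A B C) Nbar"
  shows "((q \<ge> 3 \<or> (q = 2 \<and> card ({1..m} - C) \<ge> 2)) \<longrightarrow>
            code_length Nbar = 2 * (q ^ m - q ^ card C) * (q ^ card A - 1) * q ^ card B div (q - 1)
          \<and> code_dim (code m Nbar) = m + 2 * card A + card B
          \<and> min_dist Nbar (code m Nbar) = (q ^ m - q ^ card C) * q ^ (card A + card B - 1)
          \<and> has_locality Nbar 2)
       \<and> ((q = 2 \<and> card ({1..m} - C) = 1) \<longrightarrow>
            code_length Nbar = (2 ^ card A - 1) * 2 ^ (m + card B)
          \<and> code_dim (code m Nbar) = m + 2 * card A + card B
          \<and> min_dist Nbar (code m Nbar) = 2 ^ (m + card A + card B - 2)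
          \<and> has_locality Nbar 3)"
proof -
  interpret N4_code m A B C Nbar q
    using assms(3-) by unfold_locales (auto simp: q_def)
  show ?thesis
    using code_length_eq code_dim_eq min_dist_code[unfolded min_weight_def] has_locality_2
      code_length_binary min_dist_binary has_locality_3_binary
    by auto
qed

end
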